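(* Let $i,j$ be positive integers. Write the $\mathcal{L}$-class and the $\hat{\mathcal{A}}$-class as polynomials in the Pontryagin classes, $\mathcal{L}=1+\dots+s_ip_i+\dots+s_jp_j+\dots+s_{i+j}p_{i+j}+\dots+s_{i,j}p_ip_j+\dots$ and $\hat{\mathcal{A}}=1+\dots+a_ip_i+\dots+a_jp_j+\dots+a_{i+j}p_{i+j}+\dots+a_{i,j}p_ip_j+\dots$. Then $s_is_j=s_{i+j}+\lambda s_{i,j}$ and $a_ia_j=a_{i+j}+\lambda a_{i,j}$, where $\lambda=2$ if $i=j$ and $\lambda=1$ if $i\neq j$. Consequently the $2\times 2$ matrix with rows $(s_{i,j},s_{i+j})$ and $(a_{i,j},a_{i+j})$ is non-singular.
   Context: Here $s_k$, $a_k$ denote the coefficients of $p_k$ and $s_{i,j}$, $a_{i,j}$ the coefficients of the monomial $p_ip_j$ in the Hirzebruch $\mathcal{L}$-polynomial and the $\hat{\mathcal{A}}$-polynomial respectively. *)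

theory Defs
  imports "HOL-Computational_Algebra.Formal_Power_Series" "HOL-Library.Multiset"
begin

text \<open>Elementary symmetric polynomial e_i in the N variables x 0, ..., x (N-1).
  The Pontryagin class p_i is e_i evaluated at the squares of the formal Chern roots.\<close>
definition esym :: "nat \<Rightarrow> nat \<Rightarrow> (nat \<Rightarrow> real) \<Rightarrow> real" where
  "esym N i x = (\<Sum>S\<in>{S. S \<subseteq> {..<N} \<and> card S = i}. \<Prod>m\<in>S. x m)"

text \<open>Partitions of n, as multisets of positive integers; a partition mu encodes the
  monomial p_mu = prod of p_k over k in mu.\<close>
definition partitions :: "nat \<Rightarrow> nat multiset set" where
  "partitions n = {\<mu>. (\<forall>k\<in>#\<mu>. 0 < k) \<and> sum_mset \<mu> = n}"

definition expvecs :: "nat \<Rightarrow> (nat \<Rightarrow> nat) set" where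
  "expvecs n = {\<alpha>. (\<forall>m. n \<le> m \<longrightarrow> \<alpha> m = 0) \<and> (\<Sum>m<n. \<alpha> m) = n}"

text \<open>Multiplicative sequence (Hirzebruch) with characteristic power series Q:
  K_n(p_1,...,p_n) is the degree n part of prod_m Q(x_m), written as a polynomial in the
  elementary symmetric functions p_k = e_k(x). Using n variables suffices (and makes the
  e_1..e_n algebraically independent); the coefficient vector is the unique one realizing
  this identity of polynomial functions.\<close>
definition mseq_coeffs :: "real fps \<Rightarrow> nat \<Rightarrow> nat multiset \<Rightarrow> real" where
  "mseq_coeffs Q n = (THE c. (\<forall>\<mu>. \<mu> \<notin> partitions n \<longrightarrow> c \<mu> = 0) \<and>
     (\<forall>x :: nat \<Rightarrow> real.
        (\<Sum>\<alpha>\<in>expvecs n. \<Prod>m<n. fps_nth Q (\<alpha> m) * x m ^ \<alpha> m)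
      = (\<Sum>\<mu>\<in>partitions n. c \<mu> * prod_mset (image_mset (\<lambda>k. esym n k x) \<mu>))))"

definition mseq_coeff :: "real fps \<Rightarrow> nat multiset \<Rightarrow> real" where
  "mseq_coeff Q \<mu> = mseq_coeffs Q (sum_mset \<mu>) \<mu>"

text \<open>Characteristic series of L: sqrt z / tanh (sqrt z) = cosh(sqrt z) / (sinh(sqrt z)/sqrt z).\<close>
definition L_series :: "real fps" where
  "L_series = Abs_fps (\<lambda>k. 1 / fact (2*k)) * inverse (Abs_fps (\<lambda>k. 1 / fact (2*k+1)))"

text \<open>Characteristic series of A-hat: (sqrt z / 2) / sinh (sqrt z / 2).\<close>
definition A_series :: "real fps" where
  "A_series = inverse (Abs_fps (\<lambda>k. 1 / (4 ^ k * fact (2*k+1))))"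

definition s_coeff :: "nat multiset \<Rightarrow> real" where "s_coeff \<mu> = mseq_coeff L_series \<mu>"
definition a_coeff :: "nat multiset \<Rightarrow> real" where "a_coeff \<mu> = mseq_coeff A_series \<mu>"

end

theory Submission
  imports Defs "HOL-Computational_Algebra.Polynomial"
begin

text \<open>
  For a characteristic series \<open>Q\<close> with \<open>Q(0) = 1\<close> and log-derivative \<open>R = Q'/Q\<close>, the
  product \<open>K = \<Prod>\<^sub>m Q(x\<^sub>m t)\<close> satisfies \<open>K' = K \<cdot> \<Sum>\<^sub>m x\<^sub>m R(x\<^sub>m t)\<close>, so its coefficients
  obey a recursion in which the variables enter only through power sums; Newton's identities
  rewrite these in the elementary symmetric functions \<open>p\<^sub>k\<close>. As the \<open>p\<^sub>k\<close> are algebraically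
  independent, the recursion computes the coefficients of the multiplicative sequence, and
  reading off those of \<open>p\<^sub>k\<close> and \<open>p\<^sub>i p\<^sub>j\<close> gives \<open>\<kappa>\<^sub>k = (-1)\<^sup>k\<^sup>-\<^sup>1 R\<^sub>k\<^sub>-\<^sub>1\<close> and
  \<open>\<lambda> \<kappa>\<^sub>i\<^sub>,\<^sub>j = \<kappa>\<^sub>i \<kappa>\<^sub>j - \<kappa>\<^sub>i\<^sub>+\<^sub>j\<close> for every \<open>Q\<close>.

  For \<open>\<L>\<close> and \<open>\<A>\<close>, the doubling formulas for \<open>cosh\<close> and \<open>sinh\<close> express both
  log-derivatives through the coefficients \<open>u\<^sub>k\<close> of \<open>\<surd>z coth \<surd>z\<close>:
  \<open>s\<^sub>k = (4\<^sup>k - 2) v\<^sub>k / 2\<close> and \<open>a\<^sub>k = -v\<^sub>k / (2 \<cdot> 4\<^sup>k)\<close> with \<open>v\<^sub>k = (-1)\<^sup>k\<^sup>-\<^sup>1 u\<^sub>k > 0\<close>, the sign coming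
  from the Riccati equation of \<open>\<surd>z coth \<surd>z\<close>. Then the determinant, multiplied by \<open>\<lambda>\<close>, is
  \<open>s\<^sub>i s\<^sub>j a\<^sub>i\<^sub>+\<^sub>j - s\<^sub>i\<^sub>+\<^sub>j a\<^sub>i a\<^sub>j = -v\<^sub>i v\<^sub>j v\<^sub>i\<^sub>+\<^sub>j (4\<^sup>i - 1)(4\<^sup>j - 1) / 4\<^sup>i\<^sup>+\<^sup>j\<^sup>+\<^sup>1 \<noteq> 0\<close>.
\<close>

unbundle fps_syntax

lemma in_mset_le_sum_mset: "(k::nat) \<in># \<mu> \<Longrightarrow> k \<le> sum_mset \<mu>"
  by (metis le_add1 multi_member_split sum_mset.add_mset)

lemma size_le_sum_mset: "(\<forall>k\<in>#\<mu>. 0 < (k::nat)) \<Longrightarrow> size \<mu> \<le> sum_mset \<mu>"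
  by (induction \<mu>) auto

lemma finite_partitions: "finite (partitions n)"
proof (rule finite_subset)
  show "partitions n \<subseteq> (\<Union>s\<in>{..n}. multisets_of_size {1..n} s)"
  proof
    fix \<mu> assume \<mu>: "\<mu> \<in> partitions n"
    hence "size \<mu> \<le> n" using size_le_sum_mset by (auto simp: partitions_def)
    moreover have "set_mset \<mu> \<subseteq> {1..n}"
      using \<mu> in_mset_le_sum_mset by (fastforce simp: partitions_def)
    ultimately show "\<mu> \<in> (\<Union>s\<in>{..n}. multisets_of_size {1..n} s)"
      by (auto simp: multisets_of_size_def)
  qed
qed auto

lemma finite_submultisets: "finite {\<alpha>. \<alpha> \<subseteq># (\<mu>::'a multiset)}"
proof (rule finite_subset)
  show "{\<alpha>. \<alpha> \<subseteq># \<mu>} \<subseteq> (\<Union>s\<in>{..size \<mu>}. multisets_of_size (set_mset \<mu>) s)"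
    by (auto simp: multisets_of_size_def size_mset_mono dest: mset_subset_eqD)
qed auto

lemma partitions_0: "partitions 0 = {{#}}"
  by (auto simp: partitions_def) (metis not_less0 multiset_nonemptyE)

lemma add_in_partitions: "\<alpha> \<in> partitions a \<Longrightarrow> \<beta> \<in> partitions b \<Longrightarrow> \<alpha> + \<beta> \<in> partitions (a + b)"
  by (auto simp: partitions_def)

lemma diff_in_partitions:
  "\<mu> \<in> partitions (a + b) \<Longrightarrow> \<alpha> \<in> partitions a \<Longrightarrow> \<alpha> \<subseteq># \<mu> \<Longrightarrow> \<mu> - \<alpha> \<in> partitions b"
  unfolding partitions_def
  by (auto dest: in_diffD) (metis add_diff_cancel_left' subset_mset.add_diff_inverse sum_mset.union)

lemma add_mset_image_partitions:
  assumes "0 < k"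
  shows "add_mset k ` partitions n = partitions (k + n) \<inter> {\<mu>. k \<in># \<mu>}"
proof (intro equalityI subsetI)
  fix \<mu> assume \<mu>: "\<mu> \<in> partitions (k + n) \<inter> {\<mu>. k \<in># \<mu>}"
  then have "\<mu> = {#k#} + (\<mu> - {#k#})" by simp
  moreover have "{#k#} \<in> partitions k" using assms by (simp add: partitions_def)
  ultimately have "\<mu> - {#k#} \<in> partitions n"
    using \<mu> diff_in_partitions[of \<mu> k n "{#k#}"] by simp
  then show "\<mu> \<in> add_mset k ` partitions n"
    using \<mu> by (metis IntD2 image_eqI insert_DiffM mem_Collect_eq)
qed (use assms in \<open>auto simp: partitions_def\<close>)

lemma esym_0: "esym 0 k x = (if k = 0 then 1 else 0)"
proof -
  have "{S. S \<subseteq> {..<0::nat} \<and> card S = k} = (if k = 0 then {{}} else {})" by auto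
  then show ?thesis by (simp add: esym_def)
qed

lemma subsets_containing_eq_image_insert:
  "{S. S \<subseteq> {..<Suc N} \<and> card S = Suc k \<and> N \<in> S} = insert N ` {S. S \<subseteq> {..<N} \<and> card S = k}"
proof (intro equalityI subsetI)
  fix S assume S: "S \<in> {S. S \<subseteq> {..<Suc N} \<and> card S = Suc k \<and> N \<in> S}"
  then have "finite S" by (auto intro: finite_subset)
  then have "S - {N} \<subseteq> {..<N}" "card (S - {N}) = k" "S = insert N (S - {N})"
    using S by (auto simp: less_Suc_eq)
  then show "S \<in> insert N ` {S. S \<subseteq> {..<N} \<and> card S = k}" by blast
next
  fix S assume "S \<in> insert N ` {S. S \<subseteq> {..<N} \<and> card S = k}"
  then obtain T where T: "T \<subseteq> {..<N}" "card T = k" "S = insert N T" by auto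
  then have "finite T" "N \<notin> T" by (auto intro: finite_subset)
  then show "S \<in> {S. S \<subseteq> {..<Suc N} \<and> card S = Suc k \<and> N \<in> S}" using T by auto
qed

lemma esym_Suc: "esym (Suc N) k x = esym N k x + (if k = 0 then 0 else x N * esym N (k - 1) x)"
proof -
  define B where "B = {S. S \<subseteq> {..<N} \<and> card S = k}"
  define C where "C = {S. S \<subseteq> {..<Suc N} \<and> card S = k \<and> N \<in> S}"
  have A: "{S. S \<subseteq> {..<Suc N} \<and> card S = k} = B \<union> C"
    by (auto simp: B_def C_def lessThan_Suc)
  have fin: "finite B" "finite C" by (auto simp: B_def C_def intro: finite_subset)
  have dis: "B \<inter> C = {}" by (auto simp: B_def C_def)
  have "esym (Suc N) k x = (\<Sum>S\<in>B. \<Prod>m\<in>S. x m) + (\<Sum>S\<in>C. \<Prod>m\<in>S. x m)"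
    unfolding esym_def A by (rule sum.union_disjoint[OF fin dis])
  also have "(\<Sum>S\<in>B. \<Prod>m\<in>S. x m) = esym N k x" by (simp add: esym_def B_def)
  also have "(\<Sum>S\<in>C. \<Prod>m\<in>S. x m) = (if k = 0 then 0 else x N * esym N (k - 1) x)"
  proof (cases k)
    case 0
    have "C = {}"
    proof (rule equals0I)
      fix S assume S: "S \<in> C"
      then have "finite S" by (auto simp: C_def intro: finite_subset)
      with S 0 show False by (auto simp: C_def)
    qed
    then show ?thesis using 0 by simp
  next
    case (Suc k')
    let ?T = "{S. S \<subseteq> {..<N} \<and> card S = k'}"
    have inj: "inj_on (insert N) ?T"
      by (rule inj_onI) (metis insert_ident lessThan_iff less_irrefl mem_Collect_eq subsetD)
    have "(\<Sum>S\<in>C. \<Prod>m\<in>S. x m) = (\<Sum>T\<in>?T. \<Prod>m\<in>insert N T. x m)"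
      unfolding C_def Suc subsets_containing_eq_image_insert by (rule sum.reindex[OF inj, unfolded comp_def])
    also have "\<dots> = (\<Sum>T\<in>?T. x N * (\<Prod>m\<in>T. x m))"
    proof (intro sum.cong refl)
      fix T assume "T \<in> ?T"
      then have "finite T" "N \<notin> T" by (auto intro: finite_subset)
      then show "(\<Prod>m\<in>insert N T. x m) = x N * (\<Prod>m\<in>T. x m)" by simp
    qed
    also have "\<dots> = x N * esym N (k - 1) x" by (simp add: esym_def sum_distrib_left Suc)
    finally show ?thesis using Suc by simp
  qed
  finally show ?thesis .
qed

lemma esym_cong: "(\<And>m. m < N \<Longrightarrow> x m = y m) \<Longrightarrow> esym N k x = esym N k y"
  unfolding esym_def by (intro sum.cong prod.cong refl) auto

lemma esym_eq_0_if_gt: "N < k \<Longrightarrow> esym N k x = 0"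
proof -
  assume "N < k"
  moreover have "card S \<le> N" if "S \<subseteq> {..<N}" for S
    using card_mono[OF finite_lessThan that] by simp
  ultimately have "{S. S \<subseteq> {..<N} \<and> card S = k} = {}" by (metis (mono_tags) empty_Collect_eq not_le)
  then show ?thesis unfolding esym_def by (simp only: sum.empty)
qed

lemma esym_self: "esym N N x = (\<Prod>m<N. x m)"
proof -
  have "S = {..<N}" if "S \<subseteq> {..<N}" "card S = N" for S
    using card_subset_eq[OF finite_lessThan that(1)] that(2) by simp
  then have "{S. S \<subseteq> {..<N} \<and> card S = N} = {{..<N}}" by auto
  then show ?thesis by (simp add: esym_def)
qed

text \<open>A coefficient function \<open>c\<close> of weight \<open>n\<close> stands for the polynomial
  \<open>\<Sum>\<^sub>\<mu> c \<mu> p\<^sub>\<mu>\<close> in the Pontryagin classes; \<open>eval_esym N n c x\<close> evaluates it at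
  \<open>p\<^sub>k = esym N k x\<close>.\<close>

definition esym_mset :: "nat \<Rightarrow> nat multiset \<Rightarrow> (nat \<Rightarrow> real) \<Rightarrow> real" where
  "esym_mset N \<mu> x = (\<Prod>k\<in>#\<mu>. esym N k x)"

definition eval_esym :: "nat \<Rightarrow> nat \<Rightarrow> (nat multiset \<Rightarrow> real) \<Rightarrow> (nat \<Rightarrow> real) \<Rightarrow> real" where
  "eval_esym N n c x = (\<Sum>\<mu>\<in>partitions n. c \<mu> * esym_mset N \<mu> x)"

definition homogeneous :: "nat \<Rightarrow> (nat multiset \<Rightarrow> real) \<Rightarrow> bool" where
  "homogeneous n c \<longleftrightarrow> (\<forall>\<mu>. \<mu> \<notin> partitions n \<longrightarrow> c \<mu> = 0)"

definition mset_conv :: "(nat multiset \<Rightarrow> real) \<Rightarrow> (nat multiset \<Rightarrow> real) \<Rightarrow> nat multiset \<Rightarrow> real" where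
  "mset_conv c d \<mu> = (\<Sum>\<alpha>\<in>{\<alpha>. \<alpha> \<subseteq># \<mu>}. c \<alpha> * d (\<mu> - \<alpha>))"

definition mset_shift :: "nat \<Rightarrow> (nat multiset \<Rightarrow> real) \<Rightarrow> nat multiset \<Rightarrow> real" where
  "mset_shift k c \<mu> = (if k \<in># \<mu> then c (\<mu> - {#k#}) else 0)"

lemma esym_mset_add: "esym_mset N (\<alpha> + \<beta>) x = esym_mset N \<alpha> x * esym_mset N \<beta> x"
  by (simp add: esym_mset_def)

lemma esym_mset_add_mset: "esym_mset N (add_mset k \<mu>) x = esym N k x * esym_mset N \<mu> x"
  by (simp add: esym_mset_def)

lemma esym_mset_eq_0_if_gt: "k \<in># \<mu> \<Longrightarrow> N < k \<Longrightarrow> esym_mset N \<mu> x = 0"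
  unfolding esym_mset_def by (metis esym_eq_0_if_gt image_eqI multiset.set_map prod_mset_zero_iff)

lemma esym_mset_Suc_last_0: "esym_mset (Suc N) \<mu> (x(N := 0)) = esym_mset N \<mu> x"
proof -
  have "esym (Suc N) k (x(N := 0)) = esym N k x" for k
    using esym_cong[of N "x(N := 0)" x k] by (simp add: esym_Suc)
  then show ?thesis by (simp add: esym_mset_def)
qed

lemma homogeneous_empty: "homogeneous n c \<Longrightarrow> 0 < n \<Longrightarrow> c {#} = 0"
  by (simp add: homogeneous_def partitions_def)

lemma homogeneous_singleton: "homogeneous n c \<Longrightarrow> n \<noteq> k \<Longrightarrow> c {#k#} = 0"
  by (simp add: homogeneous_def partitions_def)

lemma homogeneous_mset_conv:
  assumes "homogeneous a c" "homogeneous b d"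
  shows "homogeneous (a + b) (mset_conv c d)"
  unfolding homogeneous_def
proof (intro allI impI)
  fix \<mu> assume \<mu>: "\<mu> \<notin> partitions (a + b)"
  have "c \<alpha> * d (\<mu> - \<alpha>) = 0" if "\<alpha> \<subseteq># \<mu>" for \<alpha>
  proof (cases "\<alpha> \<in> partitions a \<and> \<mu> - \<alpha> \<in> partitions b")
    case True
    then have "\<alpha> + (\<mu> - \<alpha>) \<in> partitions (a + b)" by (intro add_in_partitions) auto
    with that \<mu> show ?thesis by (simp add: subset_mset.add_diff_inverse)
  qed (use assms in \<open>auto simp: homogeneous_def\<close>)
  then show "mset_conv c d \<mu> = 0" unfolding mset_conv_def by (intro sum.neutral) auto
qed

lemma eval_esym_mset_conv:
  assumes "homogeneous a c" "homogeneous b d"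
  shows "eval_esym N (a + b) (mset_conv c d) x = eval_esym N a c x * eval_esym N b d x"
proof -
  let ?P = "SIGMA \<mu>:partitions (a + b). {\<alpha>. \<alpha> \<subseteq># \<mu> \<and> \<alpha> \<in> partitions a}"
  have "eval_esym N (a + b) (mset_conv c d) x
      = (\<Sum>\<mu>\<in>partitions (a + b). \<Sum>\<alpha>\<in>{\<alpha>. \<alpha> \<subseteq># \<mu>}. c \<alpha> * d (\<mu> - \<alpha>) * esym_mset N \<mu> x)"
    by (simp add: eval_esym_def mset_conv_def sum_distrib_right)
  also have "\<dots> = (\<Sum>\<mu>\<in>partitions (a + b).
      \<Sum>\<alpha>\<in>{\<alpha>. \<alpha> \<subseteq># \<mu> \<and> \<alpha> \<in> partitions a}. c \<alpha> * d (\<mu> - \<alpha>) * esym_mset N \<mu> x)"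
    by (intro sum.cong refl sum.mono_neutral_right)
       (auto simp: finite_submultisets assms(1)[unfolded homogeneous_def])
  also have "\<dots> = (\<Sum>(\<mu>, \<alpha>)\<in>?P. c \<alpha> * d (\<mu> - \<alpha>) * esym_mset N \<mu> x)"
    by (rule sum.Sigma) (auto simp: finite_partitions intro: finite_subset[OF _ finite_submultisets])
  also have "\<dots> = (\<Sum>(\<alpha>, \<beta>)\<in>partitions a \<times> partitions b. c \<alpha> * d \<beta> * esym_mset N (\<alpha> + \<beta>) x)"
    by (rule sum.reindex_bij_witness[where i="\<lambda>(\<alpha>, \<beta>). (\<alpha> + \<beta>, \<alpha>)" and j="\<lambda>(\<mu>, \<alpha>). (\<alpha>, \<mu> - \<alpha>)"])
       (auto simp: add_in_partitions diff_in_partitions subset_mset.add_diff_inverse)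
  also have "\<dots> = eval_esym N a c x * eval_esym N b d x"
    by (simp add: eval_esym_def sum_product sum.cartesian_product esym_mset_add mult_ac)
  finally show ?thesis .
qed

lemma homogeneous_mset_shift:
  assumes "0 < k" "homogeneous n c"
  shows "homogeneous (k + n) (mset_shift k c)"
  unfolding homogeneous_def
proof (intro allI impI)
  fix \<mu> assume \<mu>: "\<mu> \<notin> partitions (k + n)"
  show "mset_shift k c \<mu> = 0"
  proof (cases "k \<in># \<mu>")
    case True
    have "\<mu> - {#k#} \<notin> partitions n"
    proof
      assume "\<mu> - {#k#} \<in> partitions n"
      then have "add_mset k (\<mu> - {#k#}) \<in> partitions (k + n)"
        using add_mset_image_partitions[OF assms(1), of n] by blast
      with True \<mu> show False by simp
    qed
    then show ?thesis using assms(2) True by (simp add: mset_shift_def homogeneous_def)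
  qed (simp add: mset_shift_def)
qed

lemma eval_esym_mset_shift:
  assumes "0 < k"
  shows "eval_esym N (k + n) (mset_shift k c) x = esym N k x * eval_esym N n c x"
proof -
  have "eval_esym N (k + n) (mset_shift k c) x
      = (\<Sum>\<mu>\<in>partitions (k + n) \<inter> {\<mu>. k \<in># \<mu>}. mset_shift k c \<mu> * esym_mset N \<mu> x)"
    unfolding eval_esym_def
    by (intro sum.mono_neutral_right) (auto simp: finite_partitions mset_shift_def)
  also have "\<dots> = (\<Sum>\<nu>\<in>partitions n. mset_shift k c (add_mset k \<nu>) * esym_mset N (add_mset k \<nu>) x)"
    unfolding add_mset_image_partitions[OF assms, symmetric]
    by (subst sum.reindex) (auto simp: inj_on_def)
  also have "\<dots> = esym N k x * eval_esym N n c x"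
    by (simp add: eval_esym_def mset_shift_def esym_mset_add_mset sum_distrib_left mult_ac)
  finally show ?thesis .
qed

lemma mset_shift_remove:
  assumes "\<And>\<mu>. c \<mu> \<noteq> 0 \<Longrightarrow> k \<in># \<mu>"
  shows "mset_shift k (\<lambda>\<nu>. c (add_mset k \<nu>)) = c"
proof
  fix \<mu>
  show "mset_shift k (\<lambda>\<nu>. c (add_mset k \<nu>)) \<mu> = c \<mu>"
    using assms[of \<mu>] by (cases "k \<in># \<mu>") (auto simp: mset_shift_def)
qed

definition coordwise_poly :: "((nat \<Rightarrow> real) \<Rightarrow> real) \<Rightarrow> bool" where
  "coordwise_poly f \<longleftrightarrow> (\<forall>x m. \<exists>p. \<forall>t. f (x(m := t)) = poly p t)"

lemma coordwise_poly_const: "coordwise_poly (\<lambda>x. c)"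
  unfolding coordwise_poly_def by (intro allI exI[of _ "[:c:]"]) simp

lemma coordwise_poly_var: "coordwise_poly (\<lambda>x. x k)"
  unfolding coordwise_poly_def
proof (intro allI)
  fix x :: "nat \<Rightarrow> real" and m
  show "\<exists>p. \<forall>t. (x(m := t)) k = poly p t"
    by (cases "k = m") (auto intro: exI[of _ "[:0, 1:]"] exI[of _ "[:x k:]"])
qed

lemma coordwise_poly_add: "coordwise_poly f \<Longrightarrow> coordwise_poly g \<Longrightarrow> coordwise_poly (\<lambda>x. f x + g x)"
  unfolding coordwise_poly_def by (metis poly_add)

lemma coordwise_poly_mult: "coordwise_poly f \<Longrightarrow> coordwise_poly g \<Longrightarrow> coordwise_poly (\<lambda>x. f x * g x)"
  unfolding coordwise_poly_def by (metis poly_mult)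

lemma coordwise_poly_sum:
  "(\<And>i. i \<in> I \<Longrightarrow> coordwise_poly (f i)) \<Longrightarrow> coordwise_poly (\<lambda>x. \<Sum>i\<in>I. f i x)"
  by (induction I rule: infinite_finite_induct) (auto intro: coordwise_poly_const coordwise_poly_add)

lemma coordwise_poly_prod:
  "(\<And>i. i \<in> I \<Longrightarrow> coordwise_poly (f i)) \<Longrightarrow> coordwise_poly (\<lambda>x. \<Prod>i\<in>I. f i x)"
  by (induction I rule: infinite_finite_induct) (auto intro: coordwise_poly_const coordwise_poly_mult)

lemma coordwise_poly_esym_mset: "coordwise_poly (esym_mset N \<mu>)"
proof (induction \<mu>)
  case (add k \<mu>)
  have "coordwise_poly (esym N k)"
    unfolding esym_def by (intro coordwise_poly_sum coordwise_poly_prod coordwise_poly_var)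
  with add show ?case by (simp add: esym_mset_add_mset coordwise_poly_mult)
qed (simp add: esym_mset_def coordwise_poly_const)

lemma coordwise_poly_eval_esym: "coordwise_poly (eval_esym N n c)"
  unfolding eval_esym_def
  by (intro coordwise_poly_sum coordwise_poly_mult coordwise_poly_const coordwise_poly_esym_mset)

text \<open>A nonzero polynomial has finitely many roots; apply this one coordinate at a time.\<close>

lemma coordwise_poly_eq_0:
  assumes "coordwise_poly f" "finite A" "\<And>x. \<forall>m\<in>A. x m \<noteq> 0 \<Longrightarrow> f x = 0"
  shows "f x = 0"
  using assms(2,3)
proof (induction A arbitrary: x rule: finite_induct)
  case (insert a A)
  have "f y = 0" if y: "\<forall>m\<in>A. y m \<noteq> 0" for y
  proof -
    obtain p where p: "\<And>t. f (y(a := t)) = poly p t"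
      using assms(1) unfolding coordwise_poly_def by blast
    have "poly p t = 0" if "t \<noteq> 0" for t
    proof -
      have "\<forall>m\<in>insert a A. (y(a := t)) m \<noteq> 0" using y that insert.hyps by auto
      then have "f (y(a := t)) = 0" using insert.prems by blast
      then show ?thesis by (simp add: p)
    qed
    then have "- {0} \<subseteq> {t. poly p t = 0}" by auto
    moreover have "infinite (- {0::real})" by (simp add: infinite_UNIV_char_0)
    ultimately have "infinite {t. poly p t = 0}" using finite_subset by blast
    then have "p = 0" using poly_roots_finite by blast
    then show ?thesis using p[of "y a"] by simp
  qed
  then show ?case using insert.IH by blast
qed simp

lemma eval_esym_Suc_last_0:
  "eval_esym (Suc N) n c (x(N := 0)) = eval_esym N n (\<lambda>\<nu>. if Suc N \<in># \<nu> then 0 else c \<nu>) x"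
  unfolding eval_esym_def
  by (intro sum.cong refl) (simp add: esym_mset_Suc_last_0 esym_mset_eq_0_if_gt[of "Suc N"])

lemma eval_esym_factor:
  assumes "0 < k" "\<And>\<mu>. c \<mu> \<noteq> 0 \<Longrightarrow> k \<in># \<mu>"
  shows "eval_esym N (k + n) c x = esym N k x * eval_esym N n (\<lambda>\<nu>. c (add_mset k \<nu>)) x"
proof -
  have "eval_esym N (k + n) (mset_shift k (\<lambda>\<nu>. c (add_mset k \<nu>))) x
      = esym N k x * eval_esym N n (\<lambda>\<nu>. c (add_mset k \<nu>)) x"
    by (rule eval_esym_mset_shift[OF assms(1)])
  then show ?thesis by (subst (asm) mset_shift_remove[OF assms(2)])
qed

lemma eval_esym_quotient_eq_0:
  assumes "\<And>\<mu>. c \<mu> \<noteq> 0 \<Longrightarrow> Suc N \<in># \<mu>" "\<And>x. eval_esym (Suc N) (Suc N + n) c x = 0"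
  shows "eval_esym (Suc N) n (\<lambda>\<nu>. c (add_mset (Suc N) \<nu>)) x = 0"
proof (rule coordwise_poly_eq_0[OF coordwise_poly_eval_esym, of "{..<Suc N}"])
  fix y :: "nat \<Rightarrow> real" assume "\<forall>m\<in>{..<Suc N}. y m \<noteq> 0"
  then have "esym (Suc N) (Suc N) y \<noteq> 0" by (simp add: esym_self)
  moreover have "esym (Suc N) (Suc N) y * eval_esym (Suc N) n (\<lambda>\<nu>. c (add_mset (Suc N) \<nu>)) y = 0"
    using assms(2)[of y] eval_esym_factor[of "Suc N" c] assms(1) by simp
  ultimately show "eval_esym (Suc N) n (\<lambda>\<nu>. c (add_mset (Suc N) \<nu>)) y = 0" by simp
qed simp

text \<open>Algebraic independence of \<open>e\<^sub>1, \<dots>, e\<^sub>N\<close>: setting the last variable to zero kills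
  exactly the monomials containing \<open>e\<^sub>N\<close>, so the others vanish by induction on \<open>N\<close>; the rest is
  divisible by \<open>e\<^sub>N = x\<^sub>0 \<cdots> x\<^sub>N\<^sub>-\<^sub>1\<close>, and the quotient vanishes off the coordinate hyperplanes.\<close>

lemma eval_esym_eq_0_imp_coeffs_0:
  assumes "\<And>\<mu>. c \<mu> \<noteq> 0 \<Longrightarrow> \<mu> \<in> partitions n \<and> set_mset \<mu> \<subseteq> {..N}"
    and "\<And>x. eval_esym N n c x = 0"
  shows "c \<mu> = 0"
  using assms
proof (induction N arbitrary: n c \<mu>)
  case 0
  show ?case
  proof (rule ccontr)
    assume "c \<mu> \<noteq> 0"
    then have "\<mu> = {#}" "n = 0"
      using "0.prems"(1) partitions_0 by (fastforce simp: partitions_def)+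
    then have "eval_esym 0 n c x = c \<mu>" for x
      by (simp add: eval_esym_def partitions_0 esym_mset_def)
    with "0.prems"(2) \<open>c \<mu> \<noteq> 0\<close> show False by simp
  qed
next
  case (Suc N)
  from Suc.prems show ?case
  proof (induction n arbitrary: c \<mu> rule: less_induct)
    case (less n)
    have top: "Suc N \<in># \<nu>" if "c \<nu> \<noteq> 0" for \<nu>
    proof (rule ccontr)
      let ?c' = "\<lambda>\<nu>. if Suc N \<in># \<nu> then 0 else c \<nu>"
      assume "Suc N \<notin># \<nu>"
      moreover have "?c' \<nu> = 0"
      proof (rule Suc.IH)
        fix \<nu>' assume "?c' \<nu>' \<noteq> 0"
        with less.prems(1)[of \<nu>'] show "\<nu>' \<in> partitions n \<and> set_mset \<nu>' \<subseteq> {..N}"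
          by (simp add: atMost_Suc subset_insert split: if_splits)
      next
        show "eval_esym N n ?c' x = 0" for x
          using eval_esym_Suc_last_0 less.prems(2) by metis
      qed
      ultimately show False using that by simp
    qed
    show ?case
    proof (cases "c \<mu> = 0")
      case False
      then have "Suc N \<in># \<mu>" "\<mu> \<in> partitions n" using top less.prems(1) by blast+
      then have "Suc N \<le> n" using in_mset_le_sum_mset by (auto simp: partitions_def)
      then obtain n' where n: "n = Suc N + n'" using le_Suc_ex by blast
      define c'' where "c'' = (\<lambda>\<nu>. c (add_mset (Suc N) \<nu>))"
      have "eval_esym (Suc N) (Suc N + n') c x = 0" for x
        using less.prems(2)[of x] by (simp only: n)
      note vanish = eval_esym_quotient_eq_0[OF top this, folded c''_def]
      have supp: "c'' \<nu> \<noteq> 0 \<Longrightarrow> \<nu> \<in> partitions n' \<and> set_mset \<nu> \<subseteq> {..Suc N}" for \<nu>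
        using less.prems(1)[of "add_mset (Suc N) \<nu>"] by (auto simp: c''_def partitions_def n)
      have "c'' (\<mu> - {#Suc N#}) = 0"
        using less.IH[where y = n' and c = c''] vanish supp n by simp
      then show ?thesis using \<open>Suc N \<in># \<mu>\<close> by (simp add: c''_def)
    qed
  qed
qed

lemma homogeneous_coeffs_unique:
  assumes "homogeneous n c" "homogeneous n d" "\<And>x. eval_esym n n c x = eval_esym n n d x"
  shows "c = d"
proof -
  have "c \<mu> - d \<mu> = 0" for \<mu>
  proof (rule eval_esym_eq_0_imp_coeffs_0[where N = n and n = n])
    fix \<nu> assume "c \<nu> - d \<nu> \<noteq> 0"
    then have "\<nu> \<in> partitions n"
      using assms(1,2) unfolding homogeneous_def by (metis diff_self)
    then show "\<nu> \<in> partitions n \<and> set_mset \<nu> \<subseteq> {..n}"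
      using in_mset_le_sum_mset[of _ \<nu>] by (auto simp: partitions_def)
  next
    show "eval_esym n n (\<lambda>\<nu>. c \<nu> - d \<nu>) x = 0" for x
      using assms(3)[of x] by (simp add: eval_esym_def left_diff_distrib sum_subtractf)
  qed
  then show ?thesis by auto
qed

definition fps_scale :: "'a::comm_ring_1 \<Rightarrow> 'a fps \<Rightarrow> 'a fps" where
  "fps_scale c f = Abs_fps (\<lambda>k. c ^ k * f $ k)"

lemma fps_scale_nth [simp]: "fps_scale c f $ k = c ^ k * f $ k"
  by (simp add: fps_scale_def)

lemma fps_scale_eq_compose: "fps_scale c f = f oo (fps_const c * fps_X)"
  by (simp add: fps_scale_def fps_compose_linear)

lemma fps_scale_mult:
  fixes f g :: "'a::idom fps"
  shows "fps_scale c (f * g) = fps_scale c f * fps_scale c g"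
  by (simp add: fps_scale_eq_compose fps_compose_mult_distrib)

lemma fps_scale_add: "fps_scale c (f + g) = fps_scale c f + fps_scale c g"
  by (rule fps_ext) (simp add: algebra_simps)

lemma fps_scale_diff: "fps_scale c (f - g) = fps_scale c f - fps_scale c g"
  by (rule fps_ext) (simp add: algebra_simps)

lemma fps_scale_1 [simp]: "fps_scale c 1 = 1"
  by (rule fps_ext) (simp add: fps_one_nth)

lemma fps_scale_numeral_mult: "fps_scale c (numeral n * f) = numeral n * fps_scale c f"
  by (rule fps_ext) (simp add: numeral_fps_const algebra_simps)

lemma fps_scale_X_mult: "fps_scale c (fps_X * f) = fps_const c * fps_X * fps_scale c f"
  by (rule fps_ext) (auto simp: algebra_simps power_eq_if)

lemma fps_scale_1_plus_X: "fps_scale c (1 + fps_X) = 1 + fps_const c * fps_X"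
  by (rule fps_ext) (auto simp: fps_X_nth le_Suc_eq)

lemma fps_deriv_fps_scale: "fps_deriv (fps_scale c f) = fps_const c * fps_scale c (fps_deriv f)"
  by (rule fps_ext) (simp add: mult_ac)

lemma fps_scale_inverse:
  fixes f :: "'a::field fps"
  assumes "f $ 0 \<noteq> 0"
  shows "fps_scale c (inverse f) = inverse (fps_scale c f)"
proof -
  have "fps_scale c f * fps_scale c (inverse f) = 1"
    by (simp add: fps_scale_mult[symmetric] inverse_mult_eq_1'[OF assms])
  then show ?thesis by (simp add: fps_inverse_unique)
qed

definition char_prod :: "real fps \<Rightarrow> nat \<Rightarrow> (nat \<Rightarrow> real) \<Rightarrow> real fps" where
  "char_prod Q N x = (\<Prod>m<N. fps_scale (x m) Q)"

definition power_sum :: "nat \<Rightarrow> nat \<Rightarrow> (nat \<Rightarrow> real) \<Rightarrow> real" where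
  "power_sum N k x = (\<Sum>m<N. x m ^ k)"

definition logderiv :: "'a::field fps \<Rightarrow> 'a fps" where
  "logderiv Q = fps_deriv Q * inverse Q"

lemma fps_deriv_eq_mult_logderiv:
  fixes Q :: "'a::field fps"
  shows "Q $ 0 \<noteq> 0 \<Longrightarrow> fps_deriv Q = Q * logderiv Q"
  by (simp add: logderiv_def mult.left_commute inverse_mult_eq_1')

lemma fps_deriv_prod_lessThan:
  fixes N :: nat
  assumes "\<And>m. fps_deriv (f m) = f m * g m"
  shows "fps_deriv (\<Prod>m<N. f m) = (\<Prod>m<N. f m) * (\<Sum>m<N. g m)"
  by (induction N) (simp_all add: assms algebra_simps)

text \<open>Comparing coefficients in \<open>K' = K \<cdot> \<Sum>\<^sub>m x\<^sub>m R(x\<^sub>m t)\<close> for \<open>K = \<Prod>\<^sub>m Q(x\<^sub>m t)\<close>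
  and \<open>R = Q'/Q\<close>.\<close>

lemma char_prod_nth_Suc:
  assumes "fps_deriv Q = Q * R"
  shows "real (Suc n) * char_prod Q N x $ Suc n
    = (\<Sum>i=0..n. char_prod Q N x $ i * (R $ (n - i) * power_sum N (Suc (n - i)) x))"
proof -
  define G where "G = (\<Sum>m<N. fps_const (x m) * fps_scale (x m) R)"
  have "fps_deriv (fps_scale (x m) Q) = fps_scale (x m) Q * (fps_const (x m) * fps_scale (x m) R)" for m
    by (simp add: fps_deriv_fps_scale assms fps_scale_mult mult_ac)
  then have "fps_deriv (char_prod Q N x) = char_prod Q N x * G"
    unfolding char_prod_def G_def by (rule fps_deriv_prod_lessThan)
  then have "fps_deriv (char_prod Q N x) $ n = (char_prod Q N x * G) $ n" by simp
  moreover have "G $ k = R $ k * power_sum N (Suc k) x" for k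
    by (simp add: G_def fps_sum_nth power_sum_def sum_distrib_left mult_ac)
  ultimately show ?thesis by (simp add: fps_mult_nth)
qed

lemma char_prod_nth_0:
  assumes "Q $ 0 = 1"
  shows "char_prod Q N x $ 0 = 1"
  unfolding char_prod_def by (induction N) (simp_all add: assms)

definition weak_compositions :: "nat \<Rightarrow> nat \<Rightarrow> (nat \<Rightarrow> nat) set" where
  "weak_compositions N d = {\<alpha>. (\<forall>m. N \<le> m \<longrightarrow> \<alpha> m = 0) \<and> (\<Sum>m<N. \<alpha> m) = d}"

lemma weak_compositions_0: "weak_compositions 0 d = (if d = 0 then {\<lambda>_. 0} else {})"
  by (auto simp: weak_compositions_def)

lemma weak_compositions_Suc:
  "weak_compositions (Suc N) d = (\<Union>a\<in>{..d}. (\<lambda>\<alpha>. \<alpha>(N := a)) ` weak_compositions N (d - a))"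
proof (intro equalityI subsetI)
  fix \<alpha> assume \<alpha>: "\<alpha> \<in> weak_compositions (Suc N) d"
  define \<beta> where "\<beta> = \<alpha>(N := 0)"
  have "(\<Sum>m<N. \<beta> m) = (\<Sum>m<N. \<alpha> m)" unfolding \<beta>_def by (intro sum.cong) auto
  then have "\<beta> \<in> weak_compositions N (d - \<alpha> N)" "\<alpha> N \<le> d"
    using \<alpha> by (auto simp: weak_compositions_def \<beta>_def)
  moreover have "\<alpha> = \<beta>(N := \<alpha> N)" by (auto simp: \<beta>_def)
  ultimately show "\<alpha> \<in> (\<Union>a\<in>{..d}. (\<lambda>\<alpha>. \<alpha>(N := a)) ` weak_compositions N (d - a))" by blast
next
  fix \<alpha> assume "\<alpha> \<in> (\<Union>a\<in>{..d}. (\<lambda>\<alpha>. \<alpha>(N := a)) ` weak_compositions N (d - a))"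
  then obtain a \<beta> where "a \<le> d" "\<beta> \<in> weak_compositions N (d - a)" "\<alpha> = \<beta>(N := a)" by auto
  moreover from this have "(\<Sum>m<N. \<alpha> m) = (\<Sum>m<N. \<beta> m)" by (intro sum.cong) auto
  ultimately show "\<alpha> \<in> weak_compositions (Suc N) d" by (auto simp: weak_compositions_def)
qed

lemma finite_weak_compositions: "finite (weak_compositions N d)"
  by (induction N arbitrary: d) (simp_all add: weak_compositions_0 weak_compositions_Suc)

lemma char_prod_nth:
  "char_prod Q N x $ d = (\<Sum>\<alpha>\<in>weak_compositions N d. \<Prod>m<N. Q $ \<alpha> m * x m ^ \<alpha> m)"
proof (induction N arbitrary: d)
  case 0
  then show ?case by (simp add: char_prod_def weak_compositions_0)
next
  case (Suc N)
  let ?t = "\<lambda>N \<alpha>. \<Prod>m<N. Q $ \<alpha> m * x m ^ \<alpha> m"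
  have inj: "inj_on (\<lambda>\<alpha>. \<alpha>(N := a)) (weak_compositions N e)" for a e
    by (rule inj_onI) (auto simp: weak_compositions_def fun_eq_iff, metis order_refl)
  have "?t (Suc N) (\<beta>(N := a)) = ?t N \<beta> * (Q $ a * x N ^ a)" for \<beta> a
    by (simp add: prod.cong[of "{..<N}" _ "\<lambda>m. Q $ (\<beta>(N := a)) m * x m ^ (\<beta>(N := a)) m"])
  then have "(\<Sum>\<alpha>\<in>weak_compositions (Suc N) d. ?t (Suc N) \<alpha>)
      = (\<Sum>a\<in>{..d}. \<Sum>\<beta>\<in>weak_compositions N (d - a). ?t N \<beta> * (Q $ a * x N ^ a))"
    unfolding weak_compositions_Suc
    by (subst sum.UNION_disjoint) (auto simp: finite_weak_compositions sum.reindex[OF inj],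
        metis fun_upd_same)
  also have "\<dots> = (\<Sum>a\<in>{..d}. (x N ^ a * Q $ a) * char_prod Q N x $ (d - a))"
    by (simp add: Suc.IH sum_distrib_left sum_distrib_right mult_ac)
  also have "\<dots> = (fps_scale (x N) Q * char_prod Q N x) $ d"
    by (simp add: fps_mult_nth atLeast0AtMost)
  finally show ?case by (simp add: char_prod_def mult.commute)
qed

lemma esym_n_0 [simp]: "esym N 0 x = 1"
  by (induction N) (simp_all add: esym_0 esym_Suc)

lemma char_prod_1_plus_X_nth: "char_prod (1 + fps_X) N x $ k = esym N k x"
proof (induction N arbitrary: k)
  case 0
  then show ?case by (simp add: char_prod_def esym_0)
next
  case (Suc N)
  have "char_prod (1 + fps_X) (Suc N) x = char_prod (1 + fps_X) N x * fps_scale (x N) (1 + fps_X)"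
    by (simp add: char_prod_def)
  also have "\<dots> = char_prod (1 + fps_X) N x + fps_const (x N) * fps_X * char_prod (1 + fps_X) N x"
    by (simp only: fps_scale_1_plus_X) (simp add: algebra_simps)
  finally have "char_prod (1 + fps_X) (Suc N) x
      = char_prod (1 + fps_X) N x + fps_const (x N) * fps_X * char_prod (1 + fps_X) N x" .
  then show ?case by (simp add: esym_Suc Suc.IH mult.assoc)
qed

lemma minus_one_power_diff:
  assumes "i \<in> {1..n}"
  shows "(-1::real) ^ n * (-1) ^ (n - i) = - ((-1) ^ (i - 1))"
proof -
  have n: "n + (n - i) = Suc (2 * (n - i) + (i - 1))" using assms by auto
  have "(-1::real) ^ n * (-1) ^ (n - i) = (-1) ^ (n + (n - i))" by (rule power_add[symmetric])
  also have "\<dots> = - ((-1) ^ (i - 1))" unfolding n by (simp add: power_add power_mult)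
  finally show ?thesis .
qed

text \<open>Newton's identities, from the log-derivative recursion for \<open>\<Prod>\<^sub>m (1 + x\<^sub>m t)\<close>.\<close>

lemma power_sum_Suc_esym:
  "power_sum N (Suc n) x = (-1) ^ n * real (Suc n) * esym N (Suc n) x
     + (\<Sum>i\<in>{1..n}. (-1) ^ (i - 1) * esym N i x * power_sum N (Suc n - i) x)"
proof -
  have inv: "inverse (1 + fps_X :: real fps) = Abs_fps (\<lambda>n. (-1) ^ n)"
    by (rule fps_inverse_fps_X_plus1') simp
  have "fps_deriv (1 + fps_X :: real fps) = (1 + fps_X) * inverse (1 + fps_X)"
    by (subst inverse_mult_eq_1') simp_all
  from char_prod_nth_Suc[OF this, of n N x]
  have "real (Suc n) * esym N (Suc n) x
      = (\<Sum>i=0..n. esym N i x * ((-1) ^ (n - i) * power_sum N (Suc n - i) x))"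
    by (simp add: char_prod_1_plus_X_nth inv Suc_diff_le)
  also have "\<dots> = (-1) ^ n * power_sum N (Suc n) x
      + (\<Sum>i\<in>{1..n}. (-1) ^ (n - i) * (esym N i x * power_sum N (Suc n - i) x))"
    by (simp add: sum.atLeast_Suc_atMost mult_ac)
  finally have "(-1) ^ n * (real (Suc n) * esym N (Suc n) x) = (-1) ^ n * (-1) ^ n * power_sum N (Suc n) x
      + (\<Sum>i\<in>{1..n}. (-1) ^ n * (-1) ^ (n - i) * (esym N i x * power_sum N (Suc n - i) x))"
    by (simp add: distrib_left sum_distrib_left mult.assoc)
  also have "(-1::real) ^ n * (-1) ^ n = 1"
    by (simp flip: power_add add: power_mult_distrib[symmetric])
  also have "(\<Sum>i\<in>{1..n}. (-1) ^ n * (-1) ^ (n - i) * (esym N i x * power_sum N (Suc n - i) x))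
      = - (\<Sum>i\<in>{1..n}. (-1) ^ (i - 1) * esym N i x * power_sum N (Suc n - i) x)"
    by (subst sum_negf[symmetric], rule sum.cong) (simp_all add: minus_one_power_diff)
  finally show ?thesis by simp
qed

lemma eval_esym_add:
  "eval_esym N n (\<lambda>\<mu>. c \<mu> + d \<mu>) x = eval_esym N n c x + eval_esym N n d x"
  by (simp add: eval_esym_def distrib_right sum.distrib)

lemma eval_esym_cmult: "eval_esym N n (\<lambda>\<mu>. a * c \<mu>) x = a * eval_esym N n c x"
  by (simp add: eval_esym_def sum_distrib_left mult_ac)

lemma eval_esym_divide: "eval_esym N n (\<lambda>\<mu>. c \<mu> / a) x = eval_esym N n c x / a"
  by (simp add: eval_esym_def sum_divide_distrib)

lemma eval_esym_sum: "eval_esym N n (\<lambda>\<mu>. \<Sum>i\<in>I. c i \<mu>) x = (\<Sum>i\<in>I. eval_esym N n (c i) x)"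
  by (simp add: eval_esym_def sum_distrib_right sum.swap[of _ I])

lemma eval_esym_singleton:
  assumes "0 < k"
  shows "eval_esym N k (\<lambda>\<mu>. if \<mu> = {#k#} then 1 else 0) x = esym N k x"
proof -
  have "{#k#} \<in> partitions k" using assms by (simp add: partitions_def)
  have "eval_esym N k (\<lambda>\<mu>. if \<mu> = {#k#} then 1 else 0) x
      = (\<Sum>\<mu>\<in>partitions k. if \<mu> = {#k#} then esym_mset N \<mu> x else 0)"
    unfolding eval_esym_def by (intro sum.cong) auto
  also have "\<dots> = esym N k x"
    using \<open>{#k#} \<in> partitions k\<close> by (simp add: finite_partitions esym_mset_def)
  finally show ?thesis .
qed

fun power_sum_coeffs :: "nat \<Rightarrow> nat multiset \<Rightarrow> real" where
  "power_sum_coeffs 0 \<mu> = 0"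
| "power_sum_coeffs (Suc n) \<mu> = (-1) ^ n * real (Suc n) * (if \<mu> = {#Suc n#} then 1 else 0)
     + (\<Sum>i\<in>{1..n}. (-1) ^ (i - 1) *
          (if i \<in># \<mu> then power_sum_coeffs (Suc n - i) (\<mu> - {#i#}) else 0))"

lemma power_sum_coeffs_Suc_eq:
  "power_sum_coeffs (Suc n) = (\<lambda>\<mu>. (-1) ^ n * real (Suc n) * (if \<mu> = {#Suc n#} then 1 else 0)
     + (\<Sum>i\<in>{1..n}. (-1) ^ (i - 1) * mset_shift i (power_sum_coeffs (Suc n - i)) \<mu>))"
  by (simp add: mset_shift_def fun_eq_iff)

declare power_sum_coeffs.simps(2) [simp del]

lemma homogeneous_power_sum_coeffs: "homogeneous n (power_sum_coeffs n)"
proof (induction n rule: less_induct)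
  case (less m)
  show ?case
  proof (cases m)
    case 0
    then show ?thesis by (simp add: homogeneous_def)
  next
    case (Suc n)
    have "homogeneous (Suc n) (mset_shift i (power_sum_coeffs (Suc n - i)))" if "i \<in> {1..n}" for i
      using homogeneous_mset_shift[of i "Suc n - i"] less[of "Suc n - i"] that Suc by auto
    then show ?thesis
      unfolding Suc power_sum_coeffs_Suc_eq by (auto simp: homogeneous_def partitions_def)
  qed
qed

lemma eval_esym_power_sum_coeffs:
  "0 < m \<Longrightarrow> eval_esym N m (power_sum_coeffs m) x = power_sum N m x"
proof (induction m rule: less_induct)
  case (less m)
  then obtain n where m: "m = Suc n" by (cases m) auto
  have "eval_esym N (Suc n) (mset_shift i (power_sum_coeffs (Suc n - i))) x
      = esym N i x * power_sum N (Suc n - i) x" if "i \<in> {1..n}" for i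
    using eval_esym_mset_shift[of i N "Suc n - i"] less.IH[of "Suc n - i"] that m by auto
  then show ?case
    unfolding m power_sum_coeffs_Suc_eq eval_esym_add eval_esym_cmult eval_esym_sum
    by (simp add: eval_esym_singleton eval_esym_cmult power_sum_Suc_esym mult_ac)
qed

text \<open>The recursion is coefficient comparison in \<open>char_prod_nth_Suc\<close>, with the power sums
  expressed through \<open>power_sum_coeffs\<close>.\<close>

fun mseq_rec :: "real fps \<Rightarrow> nat \<Rightarrow> nat multiset \<Rightarrow> real" where
  "mseq_rec R 0 \<mu> = (if \<mu> = {#} then 1 else 0)"
| "mseq_rec R (Suc n) \<mu> = (\<Sum>i\<in>{0..n}.
     R $ (n - i) * mset_conv (power_sum_coeffs (Suc n - i)) (mseq_rec R i) \<mu>) / real (Suc n)"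

lemma mseq_rec_Suc_eq: "mseq_rec R (Suc n) = (\<lambda>\<mu>. (\<Sum>i\<in>{0..n}.
     R $ (n - i) * mset_conv (power_sum_coeffs (Suc n - i)) (mseq_rec R i) \<mu>) / real (Suc n))"
  by (simp add: fun_eq_iff)

declare mseq_rec.simps(2) [simp del]

lemma homogeneous_mseq_rec: "homogeneous m (mseq_rec R m)"
proof (induction m rule: less_induct)
  case (less m)
  show ?case
  proof (cases m)
    case 0
    then show ?thesis by (simp add: homogeneous_def partitions_0)
  next
    case (Suc n)
    have "homogeneous (Suc n - i + i) (mset_conv (power_sum_coeffs (Suc n - i)) (mseq_rec R i))"
      if "i \<in> {0..n}" for i
      using that Suc by (intro homogeneous_mset_conv homogeneous_power_sum_coeffs less) auto
    then show ?thesis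
      unfolding Suc mseq_rec_Suc_eq by (auto simp: homogeneous_def)
  qed
qed

lemma eval_esym_mseq_rec:
  assumes "fps_deriv Q = Q * R" "Q $ 0 = 1"
  shows "eval_esym N m (mseq_rec R m) x = char_prod Q N x $ m"
proof (induction m rule: less_induct)
  case (less m)
  show ?case
  proof (cases m)
    case 0
    then show ?thesis
      by (simp add: eval_esym_def partitions_0 esym_mset_def char_prod_nth_0[OF assms(2)])
  next
    case (Suc n)
    have "eval_esym N (Suc n) (mset_conv (power_sum_coeffs (Suc n - i)) (mseq_rec R i)) x
        = power_sum N (Suc (n - i)) x * char_prod Q N x $ i" if "i \<in> {0..n}" for i
      using eval_esym_mset_conv[OF homogeneous_power_sum_coeffs[of "Suc n - i"]
          homogeneous_mseq_rec[of i R], of N x]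
        eval_esym_power_sum_coeffs[of "Suc n - i" N x] less[of i] that Suc
      by (simp add: Suc_diff_le)
    then show ?thesis
      unfolding Suc mseq_rec_Suc_eq eval_esym_divide eval_esym_sum eval_esym_cmult
      using char_prod_nth_Suc[OF assms(1), of n N x] by (simp add: field_simps mult_ac)
  qed
qed

lemma mseq_coeffs_eq_mseq_rec:
  assumes "Q $ 0 = 1"
  shows "mseq_coeffs Q n = mseq_rec (logderiv Q) n"
proof -
  have dQ: "fps_deriv Q = Q * logderiv Q"
    using assms by (simp add: fps_deriv_eq_mult_logderiv)
  have expand: "(\<Sum>\<alpha>\<in>expvecs n. \<Prod>m<n. Q $ \<alpha> m * x m ^ \<alpha> m)
      = eval_esym n n (mseq_rec (logderiv Q) n) x" for x
    by (simp add: eval_esym_mseq_rec[OF dQ assms] char_prod_nth expvecs_def weak_compositions_def)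
  show ?thesis
    unfolding mseq_coeffs_def
  proof (rule the_equality)
    show "(\<forall>\<mu>. \<mu> \<notin> partitions n \<longrightarrow> mseq_rec (logderiv Q) n \<mu> = 0) \<and>
      (\<forall>x. (\<Sum>\<alpha>\<in>expvecs n. \<Prod>m<n. Q $ \<alpha> m * x m ^ \<alpha> m) =
           (\<Sum>\<mu>\<in>partitions n. mseq_rec (logderiv Q) n \<mu> * (\<Prod>k\<in>#\<mu>. esym n k x)))"
      using homogeneous_mseq_rec[of n] expand by (simp add: homogeneous_def eval_esym_def esym_mset_def)
  next
    fix c assume c: "(\<forall>\<mu>. \<mu> \<notin> partitions n \<longrightarrow> c \<mu> = 0) \<and>
      (\<forall>x. (\<Sum>\<alpha>\<in>expvecs n. \<Prod>m<n. Q $ \<alpha> m * x m ^ \<alpha> m) =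
           (\<Sum>\<mu>\<in>partitions n. c \<mu> * (\<Prod>k\<in>#\<mu>. esym n k x)))"
    show "c = mseq_rec (logderiv Q) n"
    proof (rule homogeneous_coeffs_unique)
      show "homogeneous n c" using c by (simp add: homogeneous_def)
      show "homogeneous n (mseq_rec (logderiv Q) n)" by (rule homogeneous_mseq_rec)
      show "eval_esym n n c x = eval_esym n n (mseq_rec (logderiv Q) n) x" for x
        using c expand[of x] by (simp add: eval_esym_def esym_mset_def)
    qed
  qed
qed

lemma submultisets_singleton: "{\<alpha>. \<alpha> \<subseteq># {#k#}} = {{#}, {#k#}}"
  by (auto dest: nonempty_subseteq_mset_eq_single)

lemma submultisets_pair: "{\<alpha>. \<alpha> \<subseteq># {#a, b#}} = {{#}, {#a#}, {#b#}, {#a, b#}}"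
proof (intro equalityI subsetI)
  fix \<alpha> assume "\<alpha> \<in> {\<alpha>. \<alpha> \<subseteq># {#a, b#}}"
  then have \<alpha>: "\<alpha> \<subseteq># {#a, b#}" by simp
  then have "size \<alpha> \<le> 2" using size_mset_mono by fastforce
  then consider "size \<alpha> = 0" | "size \<alpha> = 1" | "size \<alpha> = 2" by linarith
  then show "\<alpha> \<in> {{#}, {#a#}, {#b#}, {#a, b#}}"
  proof cases
    case 2
    then obtain c where c: "\<alpha> = {#c#}" using size_1_singleton_mset by blast
    then have "c \<in># {#a, b#}" using \<alpha> by (auto dest: mset_subset_eqD)
    then show ?thesis using c by auto
  next
    case 3
    then have "\<not> \<alpha> \<subset># {#a, b#}" using mset_subset_size by fastforce
    then show ?thesis using \<alpha> by (simp add: subset_mset.le_less)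
  qed simp
qed auto

lemma mset_conv_singleton: "mset_conv X Y {#k#} = X {#} * Y {#k#} + X {#k#} * Y {#}"
  by (simp add: mset_conv_def submultisets_singleton)

lemma mset_conv_pair:
  assumes "X {#} = 0" "Y {#} = 0"
  shows "(if a = b then 2 else 1) * mset_conv X Y {#a, b#} = X {#a#} * Y {#b#} + X {#b#} * Y {#a#}"
  using assms by (simp add: mset_conv_def submultisets_pair add_mset_commute)

lemma mset_conv_unit_right: "mset_conv X (\<lambda>\<mu>. if \<mu> = {#} then 1 else 0) \<mu> = X \<mu>"
proof -
  have "X \<alpha> * (if \<mu> - \<alpha> = {#} then 1 else 0) = (if \<alpha> = \<mu> then X \<alpha> else 0)" if "\<alpha> \<subseteq># \<mu>" for \<alpha>
    using that by (auto simp: Diff_eq_empty_iff_mset)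
  then have "mset_conv X (\<lambda>\<mu>. if \<mu> = {#} then 1 else 0) \<mu>
      = (\<Sum>\<alpha>\<in>{\<alpha>. \<alpha> \<subseteq># \<mu>}. if \<alpha> = \<mu> then X \<alpha> else 0)"
    unfolding mset_conv_def by (intro sum.cong) auto
  then show ?thesis by (simp add: finite_submultisets)
qed

lemma mset_shift_pair:
  "(if a = b then 2 else 1) * mset_shift k Y {#a, b#}
     = (if k = a then Y {#b#} else 0) + (if k = b then Y {#a#} else 0)"
  by (auto simp: mset_shift_def)

lemma power_sum_coeffs_singleton: "power_sum_coeffs (Suc n) {#Suc n#} = (-1) ^ n * real (Suc n)"
proof -
  have "mset_shift i (power_sum_coeffs (Suc n - i)) {#Suc n#} = 0" if "i \<in> {1..n}" for i
    using that by (simp add: mset_shift_def)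
  then show ?thesis by (simp add: power_sum_coeffs_Suc_eq)
qed

lemma power_sum_coeffs_pair:
  "(if a = b then 2 else 1) * power_sum_coeffs (Suc a + Suc b) {#Suc a, Suc b#}
     = (-1) ^ (a + b) * real (Suc a + Suc b)"
proof -
  define n where "n = Suc (a + b)"
  let ?lam = "if a = b then 2 else 1 :: real"
  have n: "Suc a + Suc b = Suc n" by (simp add: n_def)
  have summand: "?lam * ((-1) ^ (i - 1) * mset_shift i (power_sum_coeffs (Suc n - i)) {#Suc a, Suc b#})
      = (if i = Suc a then (-1) ^ a * power_sum_coeffs (Suc b) {#Suc b#} else 0)
      + (if i = Suc b then (-1) ^ b * power_sum_coeffs (Suc a) {#Suc a#} else 0)" for i
  proof -
    have "?lam * ((-1) ^ (i - 1) * mset_shift i (power_sum_coeffs (Suc n - i)) {#Suc a, Suc b#})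
        = (-1) ^ (i - 1) * (?lam * mset_shift i (power_sum_coeffs (Suc n - i)) {#Suc a, Suc b#})"
      by (simp only: mult.left_commute)
    also have "\<dots> = (-1) ^ (i - 1) * ((if i = Suc a then power_sum_coeffs (Suc n - i) {#Suc b#} else 0)
        + (if i = Suc b then power_sum_coeffs (Suc n - i) {#Suc a#} else 0))"
      by (simp only: mset_shift_pair[of "Suc a" "Suc b", unfolded nat.inject])
    also have "\<dots> = (if i = Suc a then (-1) ^ a * power_sum_coeffs (Suc b) {#Suc b#} else 0)
        + (if i = Suc b then (-1) ^ b * power_sum_coeffs (Suc a) {#Suc a#} else 0)"
      by (simp add: n_def distrib_left)
    finally show ?thesis .
  qed
  have "power_sum_coeffs (Suc n) {#Suc a, Suc b#}
      = (\<Sum>i\<in>{1..n}. (-1) ^ (i - 1) * mset_shift i (power_sum_coeffs (Suc n - i)) {#Suc a, Suc b#})"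
    by (simp add: power_sum_coeffs_Suc_eq[of n])
  then have "?lam * power_sum_coeffs (Suc n) {#Suc a, Suc b#}
      = (\<Sum>i\<in>{1..n}. ?lam * ((-1) ^ (i - 1) * mset_shift i (power_sum_coeffs (Suc n - i)) {#Suc a, Suc b#}))"
    by (simp only: sum_distrib_left)
  also have "\<dots> = (\<Sum>i\<in>{1..n}. (if i = Suc a then (-1) ^ a * power_sum_coeffs (Suc b) {#Suc b#} else 0)
      + (if i = Suc b then (-1) ^ b * power_sum_coeffs (Suc a) {#Suc a#} else 0))"
    by (rule sum.cong[OF refl]) (rule summand)
  also have "\<dots> = (-1) ^ a * power_sum_coeffs (Suc b) {#Suc b#} + (-1) ^ b * power_sum_coeffs (Suc a) {#Suc a#}"
    by (simp add: sum.distrib n_def)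
  finally have "?lam * power_sum_coeffs (Suc n) {#Suc a, Suc b#}
      = (-1) ^ a * power_sum_coeffs (Suc b) {#Suc b#} + (-1) ^ b * power_sum_coeffs (Suc a) {#Suc a#}" .
  then show ?thesis
    unfolding n by (simp add: power_sum_coeffs_singleton power_add n_def algebra_simps)
qed

lemma mseq_rec_0: "mseq_rec R 0 = (\<lambda>\<mu>. if \<mu> = {#} then 1 else 0)"
  by auto

lemma mseq_rec_singleton: "mseq_rec R (Suc n) {#Suc n#} = (-1) ^ n * R $ n"
proof -
  have "R $ (n - i) * mset_conv (power_sum_coeffs (Suc n - i)) (mseq_rec R i) {#Suc n#}
      = (if i = 0 then R $ n * ((-1) ^ n * real (Suc n)) else 0)" if "i \<in> {0..n}" for i
  proof (cases "i = 0")
    case True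
    then show ?thesis by (simp add: mset_conv_singleton power_sum_coeffs_singleton)
  next
    case False
    then have "power_sum_coeffs (Suc n - i) {#} = 0" "mseq_rec R i {#} = 0"
      using that homogeneous_empty[OF homogeneous_power_sum_coeffs]
        homogeneous_empty[OF homogeneous_mseq_rec] by simp_all
    with False show ?thesis by (simp add: mset_conv_singleton)
  qed
  then have "(\<Sum>i\<in>{0..n}. R $ (n - i) * mset_conv (power_sum_coeffs (Suc n - i)) (mseq_rec R i) {#Suc n#})
      = (\<Sum>i\<in>{0..n}. if i = 0 then R $ n * ((-1) ^ n * real (Suc n)) else 0)"
    by (rule sum.cong[OF refl])
  then show ?thesis by (simp add: mseq_rec_Suc_eq del: of_nat_Suc)
qed

text \<open>With \<open>\<kappa>\<^sub>k\<close> the coefficient of \<open>p\<^sub>k\<close>, the only summands of the recursion seeing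
  \<open>p\<^sub>a p\<^sub>b\<close> are \<open>i = 0\<close>, \<open>i = a\<close> and \<open>i = b\<close>, contributing
  \<open>-(a + b) \<kappa>\<^sub>a\<^sub>+\<^sub>b\<close>, \<open>a \<kappa>\<^sub>a \<kappa>\<^sub>b\<close> and \<open>b \<kappa>\<^sub>a \<kappa>\<^sub>b\<close>.\<close>

lemma mseq_rec_summand_pair:
  assumes n_def: "n = Suc (a + b)" and "i \<le> n"
  shows "(if a = b then 2 else 1) *
      (R $ (n - i) * mset_conv (power_sum_coeffs (Suc n - i)) (mseq_rec R i) {#Suc a, Suc b#})
    = (if i = 0 then (-1) ^ (a + b) * real (Suc n) * R $ n else 0)
      + (if i = Suc b then real (Suc a) * (mseq_rec R (Suc a) {#Suc a#} * mseq_rec R (Suc b) {#Suc b#}) else 0)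
      + (if i = Suc a then real (Suc b) * (mseq_rec R (Suc a) {#Suc a#} * mseq_rec R (Suc b) {#Suc b#}) else 0)"
proof (cases "i = 0")
  case True
  let ?lam = "if a = b then 2 else 1 :: real"
  have "?lam * (R $ (n - i) * mset_conv (power_sum_coeffs (Suc n - i)) (mseq_rec R i) {#Suc a, Suc b#})
      = R $ n * (?lam * power_sum_coeffs (Suc a + Suc b) {#Suc a, Suc b#})"
    using True by (simp add: mseq_rec_0 mset_conv_unit_right mult.left_commute n_def)
  also have "\<dots> = (-1) ^ (a + b) * real (Suc n) * R $ n"
    by (subst power_sum_coeffs_pair) (simp add: n_def mult_ac)
  finally show ?thesis using True by simp
next
  case False
  let ?lam = "if a = b then 2 else 1 :: real"
  let ?X = "power_sum_coeffs (Suc n - i)" and ?Y = "mseq_rec R i"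
  have hX: "homogeneous (Suc n - i) ?X" and hY: "homogeneous i ?Y"
    by (rule homogeneous_power_sum_coeffs homogeneous_mseq_rec)+
  have "?X {#} = 0" using assms(2) by (intro homogeneous_empty[OF hX]) simp
  moreover have "?Y {#} = 0" using False by (intro homogeneous_empty[OF hY]) simp
  ultimately have "?lam * mset_conv ?X ?Y {#Suc a, Suc b#}
      = ?X {#Suc a#} * ?Y {#Suc b#} + ?X {#Suc b#} * ?Y {#Suc a#}"
    by (rule mset_conv_pair[of ?X ?Y "Suc a" "Suc b", unfolded nat.inject])
  also have "?X {#Suc a#} * ?Y {#Suc b#} = (if i = Suc b then ?X {#Suc a#} * mseq_rec R (Suc b) {#Suc b#} else 0)"
    using homogeneous_singleton[OF hY, of "Suc b"] by auto
  also have "?X {#Suc b#} * ?Y {#Suc a#} = (if i = Suc a then ?X {#Suc b#} * mseq_rec R (Suc a) {#Suc a#} else 0)"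
    using homogeneous_singleton[OF hY, of "Suc a"] by auto
  finally have conv: "?lam * mset_conv ?X ?Y {#Suc a, Suc b#}
      = (if i = Suc b then ?X {#Suc a#} * mseq_rec R (Suc b) {#Suc b#} else 0)
      + (if i = Suc a then ?X {#Suc b#} * mseq_rec R (Suc a) {#Suc a#} else 0)" .
  show ?thesis
    unfolding mult.left_commute[of ?lam] conv
    using False by (cases "i = Suc a"; cases "i = Suc b")
      (simp_all add: n_def power_sum_coeffs_singleton mseq_rec_singleton mult_ac)
qed

lemma mseq_rec_pair:
  "(if a = b then 2 else 1) * mseq_rec R (Suc a + Suc b) {#Suc a, Suc b#}
     = mseq_rec R (Suc a) {#Suc a#} * mseq_rec R (Suc b) {#Suc b#}
       - mseq_rec R (Suc a + Suc b) {#Suc a + Suc b#}"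
proof -
  define n where "n = Suc (a + b)"
  let ?lam = "if a = b then 2 else 1 :: real"
  let ?kap = "\<lambda>k. mseq_rec R k {#k#}"
  have n: "Suc a + Suc b = Suc n" by (simp add: n_def)
  have "real (Suc n) * mseq_rec R (Suc n) {#Suc a, Suc b#}
      = (\<Sum>i\<in>{0..n}. R $ (n - i) * mset_conv (power_sum_coeffs (Suc n - i)) (mseq_rec R i) {#Suc a, Suc b#})"
    unfolding mseq_rec_Suc_eq by (simp del: of_nat_Suc)
  then have "?lam * (real (Suc n) * mseq_rec R (Suc n) {#Suc a, Suc b#})
      = (\<Sum>i\<in>{0..n}. ?lam * (R $ (n - i) * mset_conv (power_sum_coeffs (Suc n - i)) (mseq_rec R i) {#Suc a, Suc b#}))"
    by (simp add: sum_distrib_left)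
  also have "\<dots> = (\<Sum>i\<in>{0..n}. (if i = 0 then (-1) ^ (a + b) * real (Suc n) * R $ n else 0)
      + (if i = Suc b then real (Suc a) * (?kap (Suc a) * ?kap (Suc b)) else 0)
      + (if i = Suc a then real (Suc b) * (?kap (Suc a) * ?kap (Suc b)) else 0))"
    by (rule sum.cong[OF refl]) (simp add: mseq_rec_summand_pair[OF n_def])
  also have "\<dots> = (-1) ^ (a + b) * real (Suc n) * R $ n
      + real (Suc a) * (?kap (Suc a) * ?kap (Suc b)) + real (Suc b) * (?kap (Suc a) * ?kap (Suc b))"
    by (simp add: sum.distrib n_def)
  also have "\<dots> = real (Suc n) * (?kap (Suc a) * ?kap (Suc b) - ?kap (Suc n))"
    by (simp add: mseq_rec_singleton n_def algebra_simps)
  finally show ?thesis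
    unfolding n by (simp del: of_nat_Suc)
qed

theorem mseq_coeff_pair:
  assumes "Q $ 0 = 1" "0 < i" "0 < j"
  shows "mseq_coeff Q {#i#} * mseq_coeff Q {#j#}
    = mseq_coeff Q {#i + j#} + (if i = j then 2 else 1) * mseq_coeff Q {#i, j#}"
proof -
  obtain a b where "i = Suc a" "j = Suc b" using assms(2,3) by (metis gr0_implies_Suc)
  then show ?thesis
    using mseq_rec_pair[of a b "logderiv Q"]
    by (simp add: mseq_coeff_def mseq_coeffs_eq_mseq_rec[OF assms(1)])
qed

lemma fps_numeral_mult_nth [simp]: "(numeral k * f :: 'a::comm_ring_1 fps) $ n = numeral k * f $ n"
  by (simp add: numeral_fps_const)

lemma fps_mult_numeral_nth [simp]: "(f * numeral k :: 'a::comm_ring_1 fps) $ n = f $ n * numeral k"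
  by (simp add: numeral_fps_const)

definition fps_cosh_sqrt :: "real fps" where
  "fps_cosh_sqrt = Abs_fps (\<lambda>k. 1 / fact (2 * k))"

definition fps_sinhc_sqrt :: "real fps" where
  "fps_sinhc_sqrt = Abs_fps (\<lambda>k. 1 / fact (2 * k + 1))"

lemma fps_cosh_sqrt_nth_0 [simp]: "fps_cosh_sqrt $ 0 = 1"
  by (simp add: fps_cosh_sqrt_def)

lemma fps_sinhc_sqrt_nth_0 [simp]: "fps_sinhc_sqrt $ 0 = 1"
  by (simp add: fps_sinhc_sqrt_def)

lemma fps_sinhc_sqrt_neq_0: "fps_sinhc_sqrt \<noteq> 0"
  using fps_sinhc_sqrt_nth_0 by (metis fps_zero_nth zero_neq_one)

lemma fps_cosh_sqrt_neq_0: "fps_cosh_sqrt \<noteq> 0"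
  using fps_cosh_sqrt_nth_0 by (metis fps_zero_nth zero_neq_one)

lemma fps_sinhc_sqrt_eq_deriv: "fps_sinhc_sqrt = 2 * fps_deriv fps_cosh_sqrt"
proof (rule fps_ext)
  fix n
  have f: "fact (2 * (n + 1)) = (2 * real n + 2) * (fact (2 * n + 1) :: real)"
  proof -
    have "2 * (n + 1) = Suc (2 * n + 1)" by simp
    then show ?thesis by (simp only: fact_Suc) simp
  qed
  have gen: "2 * (real (n + 1) / ((2 * real n + 2) * x)) = 1 / x" if "x > 0" for x :: real
  proof -
    have "x * 2 + x * (real n * 2) > 0" using that by (intro add_pos_nonneg) auto
    then show ?thesis using that by (simp add: field_simps)
  qed
  have "(2 * fps_deriv fps_cosh_sqrt) $ n = 2 * (real (n + 1) / fact (2 * (n + 1)))"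
    by (simp add: fps_cosh_sqrt_def)
  also have "\<dots> = 1 / fact (2 * n + 1)" unfolding f by (rule gen) simp
  finally have "(2 * fps_deriv fps_cosh_sqrt) $ n = 1 / fact (2 * n + 1)" .
  then show "fps_sinhc_sqrt $ n = (2 * fps_deriv fps_cosh_sqrt) $ n"
    by (simp add: fps_sinhc_sqrt_def)
qed

lemma fps_cosh_sqrt_eq_deriv: "fps_cosh_sqrt = fps_sinhc_sqrt + 2 * fps_X * fps_deriv fps_sinhc_sqrt"
proof (rule fps_ext)
  fix n
  show "fps_cosh_sqrt $ n = (fps_sinhc_sqrt + 2 * fps_X * fps_deriv fps_sinhc_sqrt) $ n"
  proof (cases n)
    case (Suc m)
    have f: "fact (2 * (m + 1) + 1) = (2 * real m + 3) * (fact (2 * (m + 1)) :: real)"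
    proof -
      have "2 * (m + 1) + 1 = Suc (2 * (m + 1))" by simp
      then show ?thesis by (simp only: fact_Suc) simp
    qed
    have gen: "1 / ((2 * real m + 3) * x) + 2 * (real (m + 1) / ((2 * real m + 3) * x)) = 1 / x"
      if "x > 0" for x :: real
    proof -
      have "x * 3 + x * (real m * 2) > 0" using that by (intro add_pos_nonneg) auto
      then show ?thesis using that by (simp add: field_simps)
    qed
    have "(fps_sinhc_sqrt + 2 * fps_X * fps_deriv fps_sinhc_sqrt) $ n
        = 1 / fact (2 * (m + 1) + 1) + 2 * (real (m + 1) / fact (2 * (m + 1) + 1))"
      by (simp add: fps_sinhc_sqrt_def Suc mult.assoc)
    also have "\<dots> = 1 / fact (2 * (m + 1))" unfolding f by (rule gen) simp
    finally have "(fps_sinhc_sqrt + 2 * fps_X * fps_deriv fps_sinhc_sqrt) $ n = 1 / fact (2 * (m + 1))" .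
    then show ?thesis by (simp add: fps_cosh_sqrt_def Suc)
  qed (simp add: mult.assoc)
qed

text \<open>Rewriting \<open>cosh \<surd>z\<close> and \<open>sinh \<surd>z / \<surd>z\<close> in terms of their derivatives reduces
  derivative identities between them to ring identities.\<close>

lemma fps_cosh_sinhc_sqrt_by_derivs:
  obtains C' S' where "fps_deriv fps_cosh_sqrt = C'" "fps_deriv fps_sinhc_sqrt = S'"
    "fps_sinhc_sqrt = 2 * C'" "fps_cosh_sqrt = 2 * C' + 2 * fps_X * S'"
proof -
  have "fps_cosh_sqrt = 2 * fps_deriv fps_cosh_sqrt + 2 * fps_X * fps_deriv fps_sinhc_sqrt"
    using fps_cosh_sqrt_eq_deriv
      arg_cong[OF fps_sinhc_sqrt_eq_deriv, of "\<lambda>t. t + 2 * fps_X * fps_deriv fps_sinhc_sqrt"]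
    by (rule trans)
  then show thesis by (rule that[OF refl refl fps_sinhc_sqrt_eq_deriv])
qed

lemma fps_nth_Suc_if_deriv_eq:
  assumes "fps_deriv A = 2 * (B :: real fps)"
  shows "A $ Suc k = 2 * B $ k / (real k + 1)"
proof -
  have "(real k + 1) * A $ Suc k = fps_deriv A $ k" by simp
  also have "\<dots> = 2 * B $ k" by (simp only: assms fps_numeral_mult_nth)
  finally show ?thesis by (simp add: field_simps)
qed

lemma fps_nth_if_euler_eq:
  assumes "B + 2 * fps_X * fps_deriv B = (A :: real fps)"
  shows "B $ k = A $ k / (2 * real k + 1)"
proof -
  have "(B + 2 * fps_X * fps_deriv B) $ k = (2 * real k + 1) * B $ k"
    by (cases k) (simp_all add: mult.assoc algebra_simps)
  then have "A $ k = (2 * real k + 1) * B $ k" by (simp only: assms)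
  moreover have "2 * real k + 1 \<noteq> 0" by (simp add: add_pos_nonneg[THEN less_imp_neq, symmetric])
  ultimately show ?thesis by (simp add: field_simps)
qed

text \<open>The system \<open>A' = 2B\<close>, \<open>B + 2zB' = A\<close> has a unique solution for each \<open>A(0)\<close>; it is
  solved by \<open>cosh \<surd>(cz)\<close> and \<open>\<surd>c sinh \<surd>(cz) / \<surd>z\<close> for \<open>c = 4\<close>, which gives the
  doubling formulas.\<close>

lemma fps_pair_ode_unique:
  fixes A1 A2 B1 B2 :: "real fps"
  assumes "fps_deriv A1 = 2 * B1" "B1 + 2 * fps_X * fps_deriv B1 = A1"
    "fps_deriv A2 = 2 * B2" "B2 + 2 * fps_X * fps_deriv B2 = A2" "A1 $ 0 = A2 $ 0"
  shows "A1 = A2"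
proof (rule fps_ext)
  fix k show "A1 $ k = A2 $ k"
  proof (induction k)
    case (Suc k)
    then show ?case
      using fps_nth_Suc_if_deriv_eq[OF assms(1)] fps_nth_Suc_if_deriv_eq[OF assms(3)]
        fps_nth_if_euler_eq[OF assms(2)] fps_nth_if_euler_eq[OF assms(4)] by simp
  qed (rule assms(5))
qed

lemma fps_scale_4_cosh_sqrt_eqs:
  "fps_deriv (fps_scale 4 fps_cosh_sqrt) = 2 * fps_scale 4 fps_sinhc_sqrt"
  "fps_scale 4 fps_sinhc_sqrt + 2 * fps_X * fps_deriv (fps_scale 4 fps_sinhc_sqrt)
     = fps_scale 4 fps_cosh_sqrt"
proof -
  have "fps_deriv (fps_scale 4 fps_cosh_sqrt) = fps_const 4 * fps_scale 4 (fps_deriv fps_cosh_sqrt)"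
    by (rule fps_deriv_fps_scale)
  also have "fps_const (4::real) = 2 * 2" by (simp add: numeral_fps_const)
  finally show "fps_deriv (fps_scale 4 fps_cosh_sqrt) = 2 * fps_scale 4 fps_sinhc_sqrt"
    by (simp add: fps_sinhc_sqrt_eq_deriv fps_scale_numeral_mult mult.assoc)
  have "fps_scale 4 fps_cosh_sqrt
      = fps_scale 4 fps_sinhc_sqrt + 2 * (fps_const 4 * fps_X * fps_scale 4 (fps_deriv fps_sinhc_sqrt))"
    by (subst fps_cosh_sqrt_eq_deriv)
       (simp add: fps_scale_add fps_scale_numeral_mult fps_scale_X_mult mult.assoc)
  then show "fps_scale 4 fps_sinhc_sqrt + 2 * fps_X * fps_deriv (fps_scale 4 fps_sinhc_sqrt)
      = fps_scale 4 fps_cosh_sqrt"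
    by (simp add: fps_deriv_fps_scale algebra_simps)
qed

lemma fps_scale_4_cosh_sqrt:
  "fps_scale 4 fps_cosh_sqrt = fps_cosh_sqrt * fps_cosh_sqrt + fps_X * fps_sinhc_sqrt * fps_sinhc_sqrt"
proof (rule fps_pair_ode_unique[OF fps_scale_4_cosh_sqrt_eqs])
  obtain C' S' where d: "fps_deriv fps_cosh_sqrt = C'" "fps_deriv fps_sinhc_sqrt = S'"
    "fps_sinhc_sqrt = 2 * C'" "fps_cosh_sqrt = 2 * C' + 2 * fps_X * S'"
    by (rule fps_cosh_sinhc_sqrt_by_derivs)
  show "fps_deriv (fps_cosh_sqrt * fps_cosh_sqrt + fps_X * fps_sinhc_sqrt * fps_sinhc_sqrt)
      = 2 * (fps_sinhc_sqrt * fps_cosh_sqrt)"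
    by (simp add: d(1,2)) (simp add: d(3,4) algebra_simps)
  show "fps_sinhc_sqrt * fps_cosh_sqrt + 2 * fps_X * fps_deriv (fps_sinhc_sqrt * fps_cosh_sqrt)
      = fps_cosh_sqrt * fps_cosh_sqrt + fps_X * fps_sinhc_sqrt * fps_sinhc_sqrt"
    by (simp add: d(1,2)) (simp add: d(3,4) algebra_simps)
qed simp

lemma fps_scale_4_sinhc_sqrt: "fps_scale 4 fps_sinhc_sqrt = fps_sinhc_sqrt * fps_cosh_sqrt"
proof (rule fps_ext)
  obtain C' S' where d: "fps_deriv fps_cosh_sqrt = C'" "fps_deriv fps_sinhc_sqrt = S'"
    "fps_sinhc_sqrt = 2 * C'" "fps_cosh_sqrt = 2 * C' + 2 * fps_X * S'"
    by (rule fps_cosh_sinhc_sqrt_by_derivs)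
  have product: "fps_sinhc_sqrt * fps_cosh_sqrt + 2 * fps_X * fps_deriv (fps_sinhc_sqrt * fps_cosh_sqrt)
      = fps_cosh_sqrt * fps_cosh_sqrt + fps_X * fps_sinhc_sqrt * fps_sinhc_sqrt"
    by (simp add: d(1,2)) (simp add: d(3,4) algebra_simps)
  have scaled: "fps_scale 4 fps_sinhc_sqrt + 2 * fps_X * fps_deriv (fps_scale 4 fps_sinhc_sqrt)
      = fps_cosh_sqrt * fps_cosh_sqrt + fps_X * fps_sinhc_sqrt * fps_sinhc_sqrt"
    using fps_scale_4_cosh_sqrt_eqs(2) fps_scale_4_cosh_sqrt by simp
  show "fps_scale 4 fps_sinhc_sqrt $ k = (fps_sinhc_sqrt * fps_cosh_sqrt) $ k" for k
    by (simp only: fps_nth_if_euler_eq[OF product] fps_nth_if_euler_eq[OF scaled])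
qed

lemma L_series_eq: "L_series = fps_cosh_sqrt * inverse fps_sinhc_sqrt"
  by (simp add: L_series_def fps_cosh_sqrt_def fps_sinhc_sqrt_def)

lemma L_series_nth_0 [simp]: "L_series $ 0 = 1"
  by (simp add: L_series_eq)

lemma L_series_mult_sinhc_sqrt: "L_series * fps_sinhc_sqrt = fps_cosh_sqrt"
  by (simp add: L_series_eq mult.assoc inverse_mult_eq_1)

lemma L_series_riccati: "2 * fps_X * fps_deriv L_series = L_series + fps_X - L_series * L_series"
proof -
  let ?C = fps_cosh_sqrt and ?S = fps_sinhc_sqrt and ?L = L_series
  have deriv: "fps_deriv ?L * ?S + ?L * fps_deriv ?S = fps_deriv ?C"
    using arg_cong[OF L_series_mult_sinhc_sqrt, of fps_deriv] by (simp add: add.commute)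
  have "(2 * fps_X * fps_deriv ?L) * ?S = 2 * fps_X * fps_deriv ?C - 2 * fps_X * ?L * fps_deriv ?S"
    unfolding deriv[symmetric] by (simp add: algebra_simps)
  also have "\<dots> = fps_X * ?S - 2 * fps_X * ?L * fps_deriv ?S"
    by (subst (2) fps_sinhc_sqrt_eq_deriv) (simp add: mult.assoc)
  also have "\<dots> = ?C + fps_X * ?S - ?L * ?S - 2 * fps_X * ?L * fps_deriv ?S"
    by (simp add: L_series_mult_sinhc_sqrt)
  also have "\<dots> = ?C + fps_X * ?S - ?L * ?C"
    by (subst (3) fps_cosh_sqrt_eq_deriv) (simp add: algebra_simps)
  also have "\<dots> = (?L + fps_X - ?L * ?L) * ?S"
    by (simp add: algebra_simps L_series_mult_sinhc_sqrt flip: mult.assoc)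
  finally show ?thesis using fps_sinhc_sqrt_neq_0 by simp
qed

lemma L_series_nth_Suc_rec:
  "(2 * real m + 3) * L_series $ Suc m
     = (if m = 0 then 1 else 0) - (\<Sum>i=1..m. L_series $ i * L_series $ (Suc m - i))"
proof -
  let ?u = "\<lambda>k. L_series $ k"
  have "(2 * fps_X * fps_deriv L_series) $ Suc m = (L_series + fps_X - L_series * L_series) $ Suc m"
    by (simp only: L_series_riccati)
  moreover have "(2 * fps_X * fps_deriv L_series) $ Suc m = 2 * (real (Suc m) * ?u (Suc m))"
    by (simp add: mult.assoc del: of_nat_Suc)
  moreover have "(L_series + fps_X - L_series * L_series) $ Suc m
      = ?u (Suc m) + (if m = 0 then 1 else 0) - (\<Sum>i=0..Suc m. ?u i * ?u (Suc m - i))"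
    by (simp add: fps_mult_nth fps_X_nth)
  ultimately have "2 * (real (Suc m) * ?u (Suc m))
      = ?u (Suc m) + (if m = 0 then 1 else 0) - (\<Sum>i=0..Suc m. ?u i * ?u (Suc m - i))"
    by simp
  moreover have "(\<Sum>i=0..Suc m. ?u i * ?u (Suc m - i))
      = ?u 0 * ?u (Suc m) + (\<Sum>i=1..m. ?u i * ?u (Suc m - i)) + ?u (Suc m) * ?u 0"
    by (simp add: sum.atLeast0_atMost_Suc sum.atLeast_Suc_atMost)
  ultimately show ?thesis by (simp add: algebra_simps)
qed

text \<open>\<open>L_series\<close> is \<open>\<surd>z coth \<surd>z\<close>; its coefficients alternate in sign, since the
  Riccati recursion expresses \<open>(-1)\<^sup>m L\<^sub>m\<^sub>+\<^sub>1\<close> as a positive combination of products of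
  earlier such terms.\<close>

lemma L_series_nth_Suc_sign: "0 < (-1) ^ m * L_series $ Suc m"
proof (induction m rule: less_induct)
  case (less m)
  let ?u = "\<lambda>k. L_series $ k" and ?v = "\<lambda>k. (-1) ^ k * L_series $ Suc k"
  have flip: "(-1) ^ m * (- (?u i * ?u (Suc m - i))) = ?v (i - 1) * ?v (m - i)"
    if i: "i \<in> {1..m}" for i
  proof -
    obtain a where a: "i = Suc a" using i by (cases i) auto
    have "m = Suc (a + (m - i))" using i a by auto
    then have "(-1::real) ^ m = - ((-1) ^ a * (-1) ^ (m - i))" by (metis power_add power_Suc mult_minus1)
    moreover have "Suc m - i = Suc (m - i)" using i by auto
    ultimately show ?thesis using a by (simp add: algebra_simps)
  qed
  have "(-1) ^ m * ((2 * real m + 3) * ?u (Suc m))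
      = (-1) ^ m * (if m = 0 then 1 else 0) + (\<Sum>i=1..m. (-1) ^ m * (- (?u i * ?u (Suc m - i))))"
    by (subst L_series_nth_Suc_rec) (simp add: algebra_simps sum_distrib_left sum_negf)
  also have "\<dots> = (if m = 0 then 1 else 0) + (\<Sum>i=1..m. ?v (i - 1) * ?v (m - i))"
    using flip by simp
  also have "\<dots> > 0"
  proof (cases "m = 0")
    case False
    have "?v (i - 1) * ?v (m - i) > 0" if "i \<in> {1..m}" for i
      using less[of "i - 1"] less[of "m - i"] that by auto
    then have "(\<Sum>i=1..m. ?v (i - 1) * ?v (m - i)) > 0" using False by (intro sum_pos) auto
    then show ?thesis using False by simp
  qed simp
  finally have "(2 * real m + 3) * ?v m > 0" by (simp add: algebra_simps)
  then show ?case by (simp add: zero_less_mult_iff)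
qed

lemma fps_X_div_L_series: "fps_X * inverse L_series = fps_scale 4 L_series - L_series"
proof -
  have doubled: "fps_scale 4 L_series * (fps_sinhc_sqrt * fps_cosh_sqrt)
      = fps_cosh_sqrt * fps_cosh_sqrt + fps_X * fps_sinhc_sqrt * fps_sinhc_sqrt"
    using arg_cong[OF L_series_mult_sinhc_sqrt, of "fps_scale 4"]
    by (simp add: fps_scale_mult fps_scale_4_sinhc_sqrt fps_scale_4_cosh_sqrt)
  have "((fps_scale 4 L_series - L_series) * L_series) * (fps_sinhc_sqrt * fps_sinhc_sqrt * fps_cosh_sqrt)
      = (fps_scale 4 L_series * (fps_sinhc_sqrt * fps_cosh_sqrt)) * (L_series * fps_sinhc_sqrt)
        - (L_series * fps_sinhc_sqrt) * (L_series * fps_sinhc_sqrt) * fps_cosh_sqrt"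
    by (simp add: algebra_simps)
  also have "\<dots> = fps_X * (fps_sinhc_sqrt * fps_sinhc_sqrt * fps_cosh_sqrt)"
    unfolding doubled L_series_mult_sinhc_sqrt by (simp add: algebra_simps)
  finally have "(fps_scale 4 L_series - L_series) * L_series = fps_X"
    using fps_sinhc_sqrt_neq_0 fps_cosh_sqrt_neq_0 by simp
  then have "fps_X * inverse L_series = (fps_scale 4 L_series - L_series) * (L_series * inverse L_series)"
    by (simp add: mult.assoc)
  then show ?thesis by (simp add: inverse_mult_eq_1')
qed

lemma logderiv_L_series_nth: "logderiv L_series $ m = (4 ^ Suc m - 2) * L_series $ Suc m / 2"
proof -
  have "2 * fps_X * logderiv L_series = (2 * fps_X * fps_deriv L_series) * inverse L_series"
    by (simp add: logderiv_def mult_ac)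
  also have "\<dots> = (L_series + fps_X - L_series * L_series) * inverse L_series"
    by (simp only: L_series_riccati)
  also have "\<dots> = L_series * inverse L_series + fps_X * inverse L_series
      - L_series * (L_series * inverse L_series)"
    by (simp add: algebra_simps)
  also have "\<dots> = 1 + fps_scale 4 L_series - 2 * L_series"
    by (simp add: inverse_mult_eq_1' fps_X_div_L_series)
  finally have "(2 * fps_X * logderiv L_series) $ Suc m = (1 + fps_scale 4 L_series - 2 * L_series) $ Suc m"
    by (rule arg_cong)
  then show ?thesis by (simp add: mult.assoc field_simps)
qed

lemma A_series_eq: "A_series = inverse (fps_scale (1/4) fps_sinhc_sqrt)"
proof -
  have "Abs_fps (\<lambda>k. 1 / (4 ^ k * fact (2 * k + 1))) = fps_scale (1/4) fps_sinhc_sqrt"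
    by (rule fps_ext) (simp add: fps_sinhc_sqrt_def power_one_over)
  then show ?thesis by (simp add: A_series_def)
qed

lemma A_series_nth_0 [simp]: "A_series $ 0 = 1"
  by (simp add: A_series_eq)

lemma logderiv_A_series_nth: "logderiv A_series $ m = - ((1/4) ^ Suc m * L_series $ Suc m) / 2"
proof -
  let ?T = "fps_scale (1/4) fps_sinhc_sqrt"
  have T0: "?T $ 0 = 1" by simp
  have logderiv: "logderiv A_series = - fps_deriv ?T * inverse ?T"
  proof -
    have "logderiv A_series = - fps_deriv ?T * (inverse ?T)\<^sup>2 * ?T"
      by (simp add: logderiv_def A_series_eq fps_inverse_deriv)
    also have "\<dots> = - fps_deriv ?T * (inverse ?T * ?T) * inverse ?T"
      by (simp add: power2_eq_square mult_ac)
    finally show ?thesis by (simp add: inverse_mult_eq_1)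
  qed
  have "fps_scale (1/4) (fps_cosh_sqrt - fps_sinhc_sqrt)
      = fps_scale (1/4) (2 * fps_X * fps_deriv fps_sinhc_sqrt)"
    by (subst fps_cosh_sqrt_eq_deriv) simp
  also have "\<dots> = 2 * (fps_const (1/4) * fps_X * fps_scale (1/4) (fps_deriv fps_sinhc_sqrt))"
    by (simp add: fps_scale_numeral_mult fps_scale_X_mult mult.assoc)
  also have "\<dots> = 2 * fps_X * fps_deriv ?T"
    by (simp add: fps_deriv_fps_scale mult_ac)
  finally have XT: "2 * fps_X * fps_deriv ?T = fps_scale (1/4) (fps_cosh_sqrt - fps_sinhc_sqrt)"
    by simp
  have "2 * fps_X * logderiv A_series = - (2 * fps_X * fps_deriv ?T) * inverse ?T"
    by (simp add: logderiv mult_ac)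
  also have "\<dots> = - (fps_scale (1/4) fps_cosh_sqrt - ?T) * inverse ?T"
    by (simp only: XT fps_scale_diff)
  also have "\<dots> = ?T * inverse ?T - fps_scale (1/4) fps_cosh_sqrt * inverse ?T"
    by (simp add: algebra_simps)
  also have "\<dots> = 1 - fps_scale (1/4) L_series"
    by (simp add: inverse_mult_eq_1' L_series_eq fps_scale_mult fps_scale_inverse)
  finally have "(2 * fps_X * logderiv A_series) $ Suc m = (1 - fps_scale (1/4) L_series) $ Suc m"
    by (rule arg_cong)
  then show ?thesis by (simp add: mult.assoc field_simps)
qed

lemma s_coeff_singleton:
  "s_coeff {#Suc m#} = (4 ^ Suc m - 2) * ((-1) ^ m * L_series $ Suc m) / 2"
  by (simp add: s_coeff_def mseq_coeff_def mseq_coeffs_eq_mseq_rec mseq_rec_singleton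
      logderiv_L_series_nth)

lemma a_coeff_singleton:
  "a_coeff {#Suc m#} = - ((-1) ^ m * L_series $ Suc m / 4 ^ Suc m) / 2"
  by (simp add: a_coeff_def mseq_coeff_def mseq_coeffs_eq_mseq_rec mseq_rec_singleton
      logderiv_A_series_nth power_one_over)

lemma coeff_cross_difference_neq_0:
  fixes p q r x y :: real
  assumes "p > 0" "q > 0" "r > 0" "x > 1" "y > 1"
  shows "((x - 2) * p / 2) * ((y - 2) * q / 2) * (- (r / (x * y)) / 2)
    - ((x * y - 2) * r / 2) * (- (p / x) / 2) * (- (q / y) / 2) \<noteq> 0"
proof -
  have "x \<noteq> 0" "y \<noteq> 0" using assms by auto
  then have eq: "((x - 2) * p / 2) * ((y - 2) * q / 2) * (- (r / (x * y)) / 2)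
      - ((x * y - 2) * r / 2) * (- (p / x) / 2) * (- (q / y) / 2)
      = - ((p * q * r * ((x - 1) * (y - 1))) / (4 * x * y))"
    by (simp add: field_simps)
  have "(p * q * r * ((x - 1) * (y - 1))) / (4 * x * y) > 0"
    using assms by (intro divide_pos_pos) simp_all
  then show ?thesis unfolding eq by linarith
qed

lemma s_a_coeff_cross_neq_0:
  assumes "0 < i" "0 < j"
  shows "s_coeff {#i#} * s_coeff {#j#} * a_coeff {#i + j#}
    - s_coeff {#i + j#} * a_coeff {#i#} * a_coeff {#j#} \<noteq> 0"
proof -
  obtain a b where i: "i = Suc a" and j: "j = Suc b" using assms by (metis gr0_implies_Suc)
  define v where "v k = (-1) ^ k * L_series $ Suc k" for k
  have ij: "i + j = Suc (Suc (a + b))" by (simp add: i j)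
  have pow: "(4::real) ^ Suc (Suc (a + b)) = 4 ^ Suc a * 4 ^ Suc b"
    by (simp flip: power_add)
  have "((4 ^ Suc a - 2) * v a / 2) * ((4 ^ Suc b - 2) * v b / 2) * (- (v (Suc (a + b)) / (4 ^ Suc a * 4 ^ Suc b)) / 2)
      - ((4 ^ Suc a * 4 ^ Suc b - 2) * v (Suc (a + b)) / 2) * (- (v a / 4 ^ Suc a) / 2) * (- (v b / 4 ^ Suc b) / 2) \<noteq> 0"
    by (rule coeff_cross_difference_neq_0)
       (simp_all add: v_def L_series_nth_Suc_sign one_less_power del: power_Suc)
  then show ?thesis
    unfolding ij unfolding i j s_coeff_singleton a_coeff_singleton pow v_def .
qed

theorem mainTheorem9:
  fixes i j :: nat
  assumes "0 < i" and "0 < j"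
  defines "lam \<equiv> (if i = j then 2 else 1 :: real)"
  shows "s_coeff {#i#} * s_coeff {#j#} = s_coeff {#i+j#} + lam * s_coeff {#i, j#}
     \<and> a_coeff {#i#} * a_coeff {#j#} = a_coeff {#i+j#} + lam * a_coeff {#i, j#}
     \<and> s_coeff {#i, j#} * a_coeff {#i+j#} - s_coeff {#i+j#} * a_coeff {#i, j#} \<noteq> 0"
proof (intro conjI)
  show s: "s_coeff {#i#} * s_coeff {#j#} = s_coeff {#i+j#} + lam * s_coeff {#i, j#}"
    unfolding s_coeff_def lam_def by (rule mseq_coeff_pair[OF L_series_nth_0 assms(1,2)])
  show a: "a_coeff {#i#} * a_coeff {#j#} = a_coeff {#i+j#} + lam * a_coeff {#i, j#}"
    unfolding a_coeff_def lam_def by (rule mseq_coeff_pair[OF A_series_nth_0 assms(1,2)])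
  have "lam * (s_coeff {#i, j#} * a_coeff {#i+j#} - s_coeff {#i+j#} * a_coeff {#i, j#})
      = s_coeff {#i#} * s_coeff {#j#} * a_coeff {#i + j#} - s_coeff {#i + j#} * a_coeff {#i#} * a_coeff {#j#}"
    using s a by algebra
  then show "s_coeff {#i, j#} * a_coeff {#i+j#} - s_coeff {#i+j#} * a_coeff {#i, j#} \<noteq> 0"
    using s_a_coeff_cross_neq_0[OF assms(1,2)] by auto
qed

end
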